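(* Let $\theta\in(\pi,2\pi)$. Then for all $x,y\in S_\theta$, $$(\pi/\theta)\,s_{S_\theta}(x,y)\le{\rm th}(\rho_{S_\theta}(x,y)/2)\le s_{S_\theta}(x,y),$$ and this inequality is sharp.
   Context: $S_\theta=\{x\in\mathbb{C}:0<\arg(x)<\theta\}$. For a domain $G\subsetneq\mathbb{C}$, $s_G(x,y)=\frac{|x-y|}{\inf_{z\in\partial G}(|x-z|+|z-y|)}$. The hyperbolic metric of $\mathbb{H}^2=\{z:{\rm Im}\,z>0\}$ satisfies ${\rm th}(\rho_{\mathbb{H}^2}(u,v)/2)=|u-v|/|u-\overline{v}|$, and $\rho_{S_\theta}(x,y)=\rho_{\mathbb{H}^2}(x^{\pi/\theta},y^{\pi/\theta})$ (principal branch power, a conformal map of $S_\theta$ onto $\mathbb{H}^2$). *)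

theory Defs
  imports "HOL-Analysis.Analysis"
begin

definition arg2pi :: "complex \<Rightarrow> real" where
  "arg2pi z = (if 0 \<le> Arg z then Arg z else Arg z + 2 * pi)"

definition sector :: "real \<Rightarrow> complex set" where
  "sector \<theta> = {z. z \<noteq> 0 \<and> 0 < arg2pi z \<and> arg2pi z < \<theta>}"

text \<open>Power z^a with the branch of arg in [0, 2 pi); maps S_theta onto the
  upper half-plane for a = pi / theta.\<close>
definition cpow :: "complex \<Rightarrow> real \<Rightarrow> complex" where
  "cpow z a = complex_of_real (cmod z powr a) * cis (a * arg2pi z)"

text \<open>Hyperbolic metric of the upper half-plane: th(rho/2) = |u-v|/|u - conj v|.\<close>
definition rho_H :: "complex \<Rightarrow> complex \<Rightarrow> real" where
  "rho_H u v = 2 * artanh (cmod (u - v) / cmod (u - cnj v))"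

definition rho_sector :: "real \<Rightarrow> complex \<Rightarrow> complex \<Rightarrow> real" where
  "rho_sector \<theta> x y = rho_H (cpow x (pi / \<theta>)) (cpow y (pi / \<theta>))"

definition s_metric :: "complex set \<Rightarrow> complex \<Rightarrow> complex \<Rightarrow> real" where
  "s_metric G x y = cmod (x - y) / Inf ((\<lambda>z. cmod (x - z) + cmod (z - y)) ` frontier G)"

end

theory Submission
  imports Defs
begin

(* Write x = r e^(i alpha), y = p e^(i beta) and a = pi / theta. The power map sends x, y to
   u = r^a e^(i a alpha), v = p^a e^(i a beta), and th(rho/2) = |u - v| / |u - conj v|.
   All distances involved have the form sqrt (R^2 + P^2 - 2 R P cos g), which equals
   2 sqrt (R P) sqrt (sinh (tau)^2 + sin (g/2)^2) with tau = ln (P/R) / 2, and the power map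
   multiplies both tau and the angles by a. The boundary of S_theta consists of two rays; the
   shortest broken line x -> z -> y through a ray is obtained by reflecting y in it (it is the
   segment [x, y] if that meets the ray, and passes through the vertex if the reflected angle
   exceeds pi). Comparing these lengths with |u - v| and |u - conj v| reduces both inequalities
   to a sin t <= sin (a t), sinh (a t) <= a sinh t and a tanh t <= tanh (a t) for 0 <= a <= 1.
   For two points on the bisector the ratio tends to pi / theta as they merge and to 1 as one
   of them goes to infinity, which gives sharpness. *)

section \<open>Elementary inequalities\<close>

lemma mult_sin_le_sin_mult:
  fixes a x :: real
  assumes "0 \<le> a" "a \<le> 1" "0 \<le> x" "x \<le> pi"
  shows "a * sin x \<le> sin (a * x)"
proof -
  have "(\<lambda>t. sin (a*t) - a * sin t) 0 \<le> (\<lambda>t. sin (a*t) - a * sin t) x"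
  proof (rule DERIV_nonneg_imp_increasing_open[OF assms(3)])
    fix t assume t: "0 < t" "t < x"
    show "\<exists>y. ((\<lambda>t. sin (a*t) - a * sin t) has_real_derivative y) (at t) \<and> 0 \<le> y"
    proof (intro exI conjI)
      show "((\<lambda>t. sin (a*t) - a * sin t) has_real_derivative (a * cos (a*t) - a * cos t)) (at t)"
        by (auto intro!: derivative_eq_intros)
      have "cos t \<le> cos (a*t)"
        using t assms by (intro cos_monotone_0_pi_le) (auto simp: mult_left_le_one_le)
      then show "0 \<le> a * cos (a*t) - a * cos t"
        using assms by (simp add: right_diff_distrib[symmetric])
    qed
  qed (intro continuous_intros)
  then show ?thesis by simp
qed

lemma sinh_mult_le_mult_sinh:
  fixes a t :: real
  assumes "0 \<le> a" "a \<le> 1" "0 \<le> t"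
  shows "sinh (a * t) \<le> a * sinh t"
proof -
  have "(\<lambda>u. a * sinh u - sinh (a*u)) 0 \<le> (\<lambda>u. a * sinh u - sinh (a*u)) t"
  proof (rule DERIV_nonneg_imp_increasing_open[OF assms(3)])
    fix u assume u: "0 < u" "u < t"
    show "\<exists>y. ((\<lambda>u. a * sinh u - sinh (a*u)) has_real_derivative y) (at u) \<and> 0 \<le> y"
    proof (intro exI conjI)
      show "((\<lambda>u. a * sinh u - sinh (a*u)) has_real_derivative (a * cosh u - a * cosh (a*u))) (at u)"
        by (auto intro!: derivative_eq_intros)
      have "cosh (a*u) \<le> cosh u"
        using u assms by (subst cosh_real_nonneg_le_iff) (auto simp: mult_left_le_one_le)
      then show "0 \<le> a * cosh u - a * cosh (a*u)"
        using assms by (simp add: right_diff_distrib[symmetric])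
    qed
  qed (intro continuous_intros)
  then show ?thesis by simp
qed

lemma mult_tanh_le_tanh_mult:
  fixes a t :: real
  assumes "0 \<le> a" "a \<le> 1" "0 \<le> t"
  shows "a * tanh t \<le> tanh (a * t)"
proof -
  have "(\<lambda>u. tanh (a*u) - a * tanh u) 0 \<le> (\<lambda>u. tanh (a*u) - a * tanh u) t"
  proof (rule DERIV_nonneg_imp_increasing_open[OF assms(3)])
    fix u assume u: "0 < u" "u < t"
    show "\<exists>y. ((\<lambda>u. tanh (a*u) - a * tanh u) has_real_derivative y) (at u) \<and> 0 \<le> y"
    proof (intro exI conjI)
      show "((\<lambda>u. tanh (a*u) - a * tanh u) has_real_derivative
              ((1 - tanh (a*u) ^ 2) * a - a * (1 - tanh u ^ 2))) (at u)"
        by (auto intro!: derivative_eq_intros)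
      have "tanh (a*u) \<le> tanh u" "0 \<le> tanh (a*u)"
        using u assms by (auto simp: mult_left_le_one_le)
      then have "tanh (a*u) ^ 2 \<le> tanh u ^ 2" by (intro power_mono)
      then have "a * tanh (a*u) ^ 2 \<le> a * tanh u ^ 2" using assms by (intro mult_left_mono) auto
      then show "0 \<le> (1 - tanh (a*u) ^ 2) * a - a * (1 - tanh u ^ 2)"
        by (simp add: algebra_simps)
    qed
  qed (intro continuous_intros, auto)
  then show ?thesis by simp
qed

lemma sin_mult_cos_le_mult_cos_mult_sin:
  fixes a x :: real
  assumes "0 \<le> a" "a \<le> 1" "0 \<le> x" "x \<le> pi"
  shows "sin (a*x) * cos x \<le> a * cos (a*x) * sin x"
proof -
  let ?f = "\<lambda>t. a * cos (a*t) * sin t - sin (a*t) * cos t"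
  have "?f 0 \<le> ?f x"
  proof (rule DERIV_nonneg_imp_increasing_open[OF assms(3)])
    fix t assume t: "0 < t" "t < x"
    show "\<exists>y. (?f has_real_derivative y) (at t) \<and> 0 \<le> y"
    proof (intro exI conjI)
      show "(?f has_real_derivative (1 - a*a) * (sin (a*t) * sin t)) (at t)"
        by (auto intro!: derivative_eq_intros simp: algebra_simps)
      have "a*t \<le> t" using t assms by (simp add: mult_left_le_one_le)
      then have "a*t \<le> pi" using t assms by linarith
      then have "0 \<le> sin (a*t)" using t assms by (intro sin_ge_zero) auto
      moreover have "0 \<le> sin t" using t assms by (intro sin_ge_zero) auto
      moreover have "0 \<le> 1 - a*a" using assms by (simp add: mult_le_one)
      ultimately show "0 \<le> (1 - a*a) * (sin (a*t) * sin t)" by simp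
    qed
  qed (intro continuous_intros)
  then show ?thesis by simp
qed

text \<open>Cross-multiplied form of the monotonicity of \<open>sin (a*t) / sin t\<close> on \<open>]0, pi[\<close>.\<close>
lemma sin_mult_ratio_mono:
  fixes a x y :: real
  assumes "0 \<le> a" "a \<le> 1" "0 \<le> x" "x \<le> y" "y < pi"
  shows "sin (a*x) * sin y \<le> sin (a*y) * sin x"
proof (cases "x = 0")
  case True
  have "0 \<le> sin (a*y)"
    using assms by (intro sin_ge_zero) (auto simp: mult_left_le_one_le order_trans[of _ y pi])
  then show ?thesis using True by simp
next
  case False
  have "(\<lambda>t. sin (a*t) / sin t) x \<le> (\<lambda>t. sin (a*t) / sin t) y"
  proof (rule DERIV_nonneg_imp_increasing_open[OF assms(4)])
    fix t assume t: "x < t" "t < y"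
    have st: "0 < sin t" using t assms by (intro sin_gt_zero) auto
    show "\<exists>z. ((\<lambda>t. sin (a*t) / sin t) has_real_derivative z) (at t) \<and> 0 \<le> z"
    proof (intro exI conjI)
      show "((\<lambda>t. sin (a*t) / sin t) has_real_derivative
         ((cos (a*t) * a * sin t - sin (a*t) * cos t) / (sin t * sin t))) (at t)"
        using st by (auto intro!: derivative_eq_intros simp: power2_eq_square)
      have "sin (a*t) * cos t \<le> a * cos (a*t) * sin t"
        using t assms by (intro sin_mult_cos_le_mult_cos_mult_sin) auto
      then show "0 \<le> (cos (a*t) * a * sin t - sin (a*t) * cos t) / (sin t * sin t)"
        by (intro divide_nonneg_nonneg) (auto simp: algebra_simps)
    qed
  next
    have "sin t \<noteq> 0" if "t \<in> {x..y}" for t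
      using that assms False sin_gt_zero[of t] by auto
    then show "continuous_on {x..y} (\<lambda>t. sin (a*t) / sin t)"
      by (intro continuous_intros) auto
  qed
  moreover have "0 < sin x" "0 < sin y" using assms False by (auto intro!: sin_gt_zero)
  ultimately show ?thesis by (simp add: field_simps)
qed

lemma sin_mult_sq_diff_mono:
  fixes a x y :: real
  assumes "0 \<le> a" "a \<le> 1" "0 \<le> x" "x \<le> y" "y \<le> pi/2"
  shows "sin (a*x)^2 - a^2 * sin x ^2 \<le> sin (a*y)^2 - a^2 * sin y ^2"
proof -
  let ?f = "\<lambda>t. sin (a*t)^2 - a^2 * sin t ^2"
  have "?f x \<le> ?f y"
  proof (rule DERIV_nonneg_imp_increasing_open[OF assms(4)])
    fix t assume t: "x < t" "t < y"
    show "\<exists>z. (?f has_real_derivative z) (at t) \<and> 0 \<le> z"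
    proof (intro exI conjI)
      have "sin (a*(2*t)) = 2 * sin (a*t) * cos (a*t)"
        using sin_double[of "a*t"] by (simp add: mult.left_commute)
      then have "2 * sin (a*t) * (cos (a*t) * a) - a^2 * (2 * sin t * cos t)
          = a * (sin (a*(2*t)) - a * sin (2*t))"
        by (simp only: sin_double) (simp add: power2_eq_square algebra_simps)
      then show "(?f has_real_derivative a * (sin (a*(2*t)) - a * sin (2*t))) (at t)"
        by (auto intro!: derivative_eq_intros simp: algebra_simps)
      have "a * sin (2*t) \<le> sin (a*(2*t))" using t assms by (intro mult_sin_le_sin_mult) auto
      then show "0 \<le> a * (sin (a*(2*t)) - a * sin (2*t))" using assms by simp
    qed
  qed (intro continuous_intros)
  then show ?thesis by simp
qed

lemma sin_sq_mono:
  fixes x y :: real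
  assumes "0 \<le> x" "x \<le> y" "y \<le> pi/2"
  shows "sin x ^ 2 \<le> sin y ^ 2"
proof -
  have "sin x \<le> sin y" using assms by (intro sin_monotone_2pi_le) auto
  moreover have "0 \<le> sin x" using assms by (intro sin_ge_zero) auto
  ultimately show ?thesis by (intro power_mono) auto
qed

lemma sin_sq_abs: "sin \<bar>x\<bar> ^ 2 = sin x ^ 2" for x :: real
  by (cases "x \<ge> 0") auto

lemma sin_sq_le_one: "sin x ^ 2 \<le> 1" for x :: real
  using abs_sin_le_one[of x] by (simp add: abs_square_le_1)

lemma mult_sin_half_sq_le:
  fixes a d :: real
  assumes "0 \<le> a" "a \<le> 1" "\<bar>d\<bar> \<le> 2*pi"
  shows "a^2 * sin (d/2) ^ 2 \<le> sin (a*d/2) ^ 2"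
proof -
  have "a * sin (\<bar>d\<bar>/2) \<le> sin (a * (\<bar>d\<bar>/2))" using assms by (intro mult_sin_le_sin_mult) auto
  moreover have "0 \<le> a * sin (\<bar>d\<bar>/2)" using assms by (intro mult_nonneg_nonneg sin_ge_zero) auto
  ultimately have "(a * sin (\<bar>d\<bar>/2))^2 \<le> sin (a * (\<bar>d\<bar>/2))^2" by (intro power_mono) auto
  then show ?thesis
    using sin_sq_abs[of "d/2"] sin_sq_abs[of "a*d/2"] assms by (simp add: power_mult_distrib abs_mult)
qed

section \<open>Distances in polar coordinates\<close>

definition polar_dist_sq :: "real \<Rightarrow> real \<Rightarrow> real \<Rightarrow> real" where
  "polar_dist_sq r p g = r^2 + p^2 - 2*r*p*cos g"

lemma norm_rcis_diff_sq: "cmod (rcis r A - rcis p B)^2 = polar_dist_sq r p (A - B)"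
proof -
  have "cmod (rcis r A - rcis p B)^2 = (r * cos A - p * cos B)^2 + (r * sin A - p * sin B)^2"
    by (simp add: cmod_power2)
  also have "\<dots> = r^2 * (sin A ^2 + cos A ^2) + p^2 * (sin B^2 + cos B^2)
      - 2*r*p*(cos A * cos B + sin A * sin B)"
    unfolding power2_eq_square by algebra
  also have "\<dots> = polar_dist_sq r p (A - B)" by (simp add: polar_dist_sq_def cos_diff)
  finally show ?thesis .
qed

lemma norm_rcis_diff: "cmod (rcis r A - rcis p B) = sqrt (polar_dist_sq r p (A - B))"
  by (metis norm_rcis_diff_sq norm_ge_zero real_sqrt_unique)

lemma polar_dist_sq_nonneg: "0 \<le> polar_dist_sq r p g"
  using norm_rcis_diff_sq[of r g p 0] by (metis diff_zero zero_le_power2)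

lemma polar_dist_sq_minus: "polar_dist_sq r p (-g) = polar_dist_sq r p g"
  by (simp add: polar_dist_sq_def)

lemma polar_dist_sq_two_pi_minus: "polar_dist_sq r p (2*pi - g) = polar_dist_sq r p g"
  by (simp add: polar_dist_sq_def cos_diff)

lemma polar_dist_sq_0: "polar_dist_sq r p 0 = (r - p)^2"
  by (simp add: polar_dist_sq_def power2_eq_square algebra_simps)

lemma polar_dist_sq_pi: "polar_dist_sq r p pi = (r + p)^2"
  by (simp add: polar_dist_sq_def power2_eq_square algebra_simps)

lemma cnj_rcis: "cnj (rcis r t) = rcis r (-t)"
  by (simp add: rcis_def cis_cnj)

lemma norm_rcis_diff_cnj_sq: "cmod (rcis r A - cnj (rcis p B))^2 = polar_dist_sq r p (A + B)"
  by (simp add: cnj_rcis norm_rcis_diff_sq)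

lemma norm_rcis_diff_swap: "cmod (rcis r A - rcis p B) = cmod (rcis r (B - A) - rcis p 0)"
  unfolding norm_rcis_diff by (metis diff_zero minus_diff_eq polar_dist_sq_minus)

lemma polar_dist_sq_half_angle: "polar_dist_sq r p g = (p - r)^2 + 4*r*p * sin (g/2)^2"
proof -
  have c: "cos g = 1 - 2 * sin (g/2)^2" using cos_double_sin[of "g/2"] by simp
  show ?thesis unfolding polar_dist_sq_def c by (simp add: power2_diff algebra_simps)
qed

lemma polar_dist_sq_diff_le_add:
  fixes r p x y :: real
  assumes "0 \<le> r" "0 \<le> p" "0 \<le> x" "x \<le> pi" "0 \<le> y" "y \<le> pi"
  shows "polar_dist_sq r p (x - y) \<le> polar_dist_sq r p (x + y)"
proof -
  have "0 \<le> r * p * (sin x * sin y)" using assms by (simp add: sin_ge_zero)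
  then show ?thesis by (simp add: polar_dist_sq_def cos_diff cos_add algebra_simps)
qed

text \<open>\<open>radial_term r p\<close> is \<open>sinh (ln (p/r) / 2)^2\<close>. Passing from \<open>(r, p, g)\<close> to
  \<open>(r powr a, p powr a, a*g)\<close> multiplies both \<open>ln (p/r) / 2\<close> and \<open>g/2\<close> by \<open>a\<close>.\<close>
definition radial_term :: "real \<Rightarrow> real \<Rightarrow> real" where
  "radial_term r p = (p - r)^2 / (4 * (r * p))"

lemma radial_term_nonneg: "0 \<le> r \<Longrightarrow> 0 \<le> p \<Longrightarrow> 0 \<le> radial_term r p"
  by (simp add: radial_term_def)

lemma polar_dist_sq_radial_term:
  assumes "0 < r" "0 < p"
  shows "polar_dist_sq r p g = 4*r*p*(radial_term r p + sin (g/2)^2)"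
  using assms unfolding polar_dist_sq_half_angle radial_term_def by (simp add: field_simps)

lemma radial_term_powr_eq_sinh_sq:
  fixes r p a :: real
  assumes "0 < r" "0 < p"
  shows "radial_term (r powr a) (p powr a) = sinh (a * (ln (p / r) / 2)) ^ 2"
proof -
  define t where "t = a * (ln (p / r) / 2)"
  have l: "2*t = a * ln p - a * ln r" and l': "-(2*t) = a * ln r - a * ln p"
    using assms by (simp_all add: t_def ln_div field_simps)
  have e: "exp (2*t) = p powr a / r powr a" "exp (-(2*t)) = r powr a / p powr a"
    using assms unfolding l l' by (simp_all add: powr_def exp_diff)
  have "sinh t ^ 2 = (exp t * exp t + exp (-t) * exp (-t) - 2 * (exp t * exp (-t))) / 4"
    by (simp add: sinh_def power2_eq_square algebra_simps divide_simps)
  also have "exp t * exp t = exp (2*t)" by (simp add: exp_add[symmetric])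
  also have "exp (-t) * exp (-t) = exp (-(2*t))" by (simp add: exp_add[symmetric])
  also have "exp t * exp (-t) = 1" by (simp add: exp_minus)
  finally have "sinh t ^ 2 = (p powr a / r powr a + r powr a / p powr a - 2) / 4"
    unfolding e by simp
  moreover have "r powr a > 0" "p powr a > 0" using assms by auto
  ultimately show ?thesis
    unfolding t_def[symmetric] radial_term_def by (simp add: field_simps power2_eq_square)
qed

lemma radial_term_powr_bounds:
  fixes r p a :: real
  assumes "0 < r" "0 < p" "0 \<le> a" "a \<le> 1"
  defines "X \<equiv> radial_term r p" and "X' \<equiv> radial_term (r powr a) (p powr a)"
  shows "X' \<le> a^2 * X" and "a^2 * X \<le> X' * (1 + (1 - a^2) * X)"
proof -
  define t where "t = \<bar>ln (p / r) / 2\<bar>"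
  have t0: "0 \<le> t" by (simp add: t_def)
  have sq: "sinh (c * t) ^ 2 = sinh (c * (ln (p / r) / 2)) ^ 2" for c
    unfolding t_def by (cases "ln (p / r) / 2 \<ge> 0") (auto simp: abs_if)
  have X: "X = sinh t ^ 2"
    using sq[of 1] radial_term_powr_eq_sinh_sq[OF assms(1,2), of 1] assms by (simp add: X_def)
  have X': "X' = sinh (a*t) ^ 2"
    using sq[of a] radial_term_powr_eq_sinh_sq[OF assms(1,2), of a] by (simp add: X'_def)
  have "sinh (a*t) \<le> a * sinh t" "0 \<le> sinh (a*t)"
    using assms t0 by (simp_all add: sinh_mult_le_mult_sinh)
  from power_mono[OF this, of 2] show "X' \<le> a^2 * X"
    unfolding X X' by (simp add: power_mult_distrib)
  define S where "S = sinh t"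
  define s where "s = sinh (a*t)"
  define Cc where "Cc = cosh t"
  define c where "c = cosh (a*t)"
  have pos: "0 < Cc" "0 < c" "0 \<le> S" "0 \<le> s"
    using t0 assms by (auto simp: S_def s_def Cc_def c_def)
  have "a * (S / Cc) \<le> s / c"
    using mult_tanh_le_tanh_mult[of a t] assms t0 by (simp add: tanh_def S_def s_def Cc_def c_def)
  then have "a * S * c \<le> s * Cc" using pos by (simp add: field_simps)
  then have "(a * S * c)^2 \<le> (s * Cc)^2" using pos assms by (intro power_mono) auto
  moreover have "Cc^2 = 1 + S^2" "c^2 = 1 + s^2"
    by (simp_all add: S_def s_def Cc_def c_def cosh_square_eq)
  ultimately have "a^2 * S^2 * (1 + s^2) \<le> s^2 * (1 + S^2)" by (simp add: power_mult_distrib)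
  then show "a^2 * X \<le> X' * (1 + (1 - a^2) * X)"
    unfolding X X' S_def[symmetric] s_def[symmetric] by (simp add: algebra_simps)
qed

text \<open>In the next two lemmas \<open>X, X'\<close> stand for radial terms before and after the power map
  and \<open>B, B', C, C'\<close> for squared sines of half angles.\<close>
lemma lower_comparison_algebra:
  fixes k X X' B B' C C' :: real
  assumes "0 \<le> k" "k \<le> 1" "0 \<le> X" "0 \<le> X'" "X' \<le> k * X"
    and "k * X \<le> X' * (1 + (1 - k) * X)" and "0 \<le> B" "0 \<le> C'" "C' \<le> C" "C \<le> 1" "k * B \<le> B'"
  shows "k * ((X + B) * (X' + C')) \<le> (X' + B') * (X + C)"
proof -
  have X: "0 \<le> X" "X' \<le> X" using assms by (auto intro: order_trans mult_left_le_one_le)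
  have "(X' + B') * (X + C) - k * ((X + B) * (X' + C')) =
      ((1 - k) * X * X' + C * (X' - k * X)) + k * X * (C - C')
      + (B' * X - k * B * X') + (B' * C - k * B * C')"
    by (simp add: algebra_simps)
  moreover have "0 \<le> (1 - k) * X * X' + C * (X' - k * X)"
  proof -
    have "(1 - C) * (X' - k * X) \<le> 0" using assms by (intro mult_nonneg_nonpos) auto
    then show ?thesis using assms by (simp add: algebra_simps)
  qed
  moreover have "0 \<le> k * X * (C - C')" using assms X by simp
  moreover have "k * B * X' \<le> B' * X"
    using assms X by (meson mult_left_mono mult_nonneg_nonneg mult_right_mono order_trans)
  moreover have "k * B * C' \<le> B' * C"
    using assms by (meson mult_left_mono mult_nonneg_nonneg mult_right_mono order_trans)
  ultimately show ?thesis by linarith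
qed

lemma upper_comparison_algebra:
  fixes k X X' B B' C C' :: real
  assumes "0 \<le> X" "X' \<le> k * X" "B \<le> C" "k * (C - B) \<le> C' - B'" "B' * C \<le> B * C'"
  shows "(X' + B') * (X + C) \<le> (X + B) * (X' + C')"
proof -
  have "(X + B) * (X' + C') - (X' + B') * (X + C) = X * (C' - B') + X' * (B - C) + (B * C' - B' * C)"
    by (simp add: algebra_simps)
  moreover have "k * X * (B - C) \<le> X' * (B - C)" using assms by (intro mult_right_mono_neg) auto
  moreover have "X * (k * (C - B)) \<le> X * (C' - B')" using assms by (intro mult_left_mono)
  ultimately show ?thesis using assms by (simp add: algebra_simps)
qed

lemma polar_dist_sq_powr_lower_comparison:
  fixes a r p g g' h h' :: real
  assumes a: "0 \<le> a" "a \<le> 1" and rp: "0 < r" "0 < p"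
    and h': "sin (h'/2)^2 \<le> sin (g'/2)^2" and h: "a^2 * sin (g/2)^2 \<le> sin (h/2)^2"
  shows "a^2 * (polar_dist_sq r p g * polar_dist_sq (r powr a) (p powr a) h')
      \<le> polar_dist_sq r p g' * polar_dist_sq (r powr a) (p powr a) h"
proof -
  define R P where "R = r powr a" and "P = p powr a"
  have RP: "0 < R" "0 < P" using rp by (auto simp: R_def P_def)
  define X X' where "X = radial_term r p" and "X' = radial_term R P"
  have "0 \<le> a^2" "a^2 \<le> 1" using a by (auto simp: power_le_one)
  moreover have "X' \<le> a^2 * X" "a^2 * X \<le> X' * (1 + (1 - a^2) * X)"
    using radial_term_powr_bounds[OF rp a] by (simp_all add: X_def X'_def R_def P_def)
  moreover have "0 \<le> X" "0 \<le> X'" using rp RP by (simp_all add: X_def X'_def radial_term_nonneg)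
  ultimately have "a^2 * ((X + sin (g/2)^2) * (X' + sin (h'/2)^2))
      \<le> (X' + sin (h/2)^2) * (X + sin (g'/2)^2)"
    using h h' by (intro lower_comparison_algebra) (auto simp: sin_sq_le_one)
  then have "(4*r*p*(4*R*P)) * (a^2 * ((X + sin (g/2)^2) * (X' + sin (h'/2)^2)))
      \<le> (4*r*p*(4*R*P)) * ((X' + sin (h/2)^2) * (X + sin (g'/2)^2))"
    using rp RP by (intro mult_left_mono) auto
  then show ?thesis
    unfolding R_def[symmetric] P_def[symmetric] polar_dist_sq_radial_term[OF rp]
      polar_dist_sq_radial_term[OF RP] X_def X'_def
    by (simp add: algebra_simps)
qed

lemma polar_dist_sq_powr_upper_comparison:
  fixes a r p g g' h h' :: real
  assumes a: "0 \<le> a" "a \<le> 1" and rp: "0 < r" "0 < p"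
    and "sin (g/2)^2 \<le> sin (g'/2)^2"
    and "a^2 * (sin (g'/2)^2 - sin (g/2)^2) \<le> sin (h'/2)^2 - sin (h/2)^2"
    and "sin (h/2)^2 * sin (g'/2)^2 \<le> sin (g/2)^2 * sin (h'/2)^2"
  shows "polar_dist_sq (r powr a) (p powr a) h * polar_dist_sq r p g'
      \<le> polar_dist_sq r p g * polar_dist_sq (r powr a) (p powr a) h'"
proof -
  define R P where "R = r powr a" and "P = p powr a"
  have RP: "0 < R" "0 < P" using rp by (auto simp: R_def P_def)
  define X X' where "X = radial_term r p" and "X' = radial_term R P"
  have "0 \<le> X" using rp by (simp add: X_def radial_term_nonneg)
  moreover have "X' \<le> a^2 * X"
    using radial_term_powr_bounds[OF rp a] by (simp add: X_def X'_def R_def P_def)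
  ultimately have "(X' + sin (h/2)^2) * (X + sin (g'/2)^2) \<le> (X + sin (g/2)^2) * (X' + sin (h'/2)^2)"
    using assms by (intro upper_comparison_algebra)
  then have "(4*r*p*(4*R*P)) * ((X' + sin (h/2)^2) * (X + sin (g'/2)^2))
      \<le> (4*r*p*(4*R*P)) * ((X + sin (g/2)^2) * (X' + sin (h'/2)^2))"
    using rp RP by (intro mult_left_mono) auto
  then show ?thesis
    unfolding R_def[symmetric] P_def[symmetric] polar_dist_sq_radial_term[OF rp]
      polar_dist_sq_radial_term[OF RP] X_def X'_def
    by (simp add: algebra_simps)
qed

section \<open>Angle estimates\<close>

text \<open>For \<open>0 \<le> \<phi> \<le> 2*pi\<close>, \<open>axis_angle \<phi>\<close> is the angle between the direction \<open>\<phi>\<close> and the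
  positive real axis. Reflecting \<open>rcis p \<beta>\<close> in that axis, \<open>reflection_angle \<alpha> \<beta>\<close> is the angle
  at \<open>0\<close> between \<open>rcis r \<alpha>\<close> and the mirror image, capped at \<open>pi\<close>: it governs the shortest
  path from \<open>rcis r \<alpha>\<close> to \<open>rcis p \<beta>\<close> through a point of the axis.\<close>
definition axis_angle :: "real \<Rightarrow> real" where
  "axis_angle \<phi> = (if \<phi> \<le> pi then \<phi> else 2*pi - \<phi>)"

definition reflection_angle :: "real \<Rightarrow> real \<Rightarrow> real" where
  "reflection_angle \<alpha> \<beta> = min pi (axis_angle \<alpha> + axis_angle \<beta>)"

lemma axis_angle_bounds:
  fixes \<phi> :: real
  assumes "0 \<le> \<phi>" "\<phi> \<le> 2*pi"
  shows "cos (axis_angle \<phi>) = cos \<phi>" "0 \<le> axis_angle \<phi>" "axis_angle \<phi> \<le> pi"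
  using assms cos_diff[of "2*pi" \<phi>] by (auto simp: axis_angle_def)

lemma sin_sq_le_sin_sq_reflection_angle:
  fixes a \<alpha> \<beta> :: real
  assumes a: "1/2 < a" "a < 1" and \<alpha>: "0 < \<alpha>" "\<alpha> < pi/a" and \<beta>: "0 < \<beta>" "\<beta> < pi/a"
    and close: "\<bar>\<alpha> - \<beta>\<bar> < pi"
  shows "sin (a*(\<alpha>+\<beta>)/2) ^ 2 \<le> sin (reflection_angle \<alpha> \<beta> / 2) ^ 2"
proof -
  have th: "pi < pi/a" "pi/a < 2*pi" using a by (auto simp: field_simps)
  show ?thesis
  proof (cases "reflection_angle \<alpha> \<beta> = pi")
    case True
    then show ?thesis by (simp add: sin_sq_le_one)
  next
    case False
    then have refl: "reflection_angle \<alpha> \<beta> = axis_angle \<alpha> + axis_angle \<beta>"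
      and lt: "axis_angle \<alpha> + axis_angle \<beta> < pi"
      by (auto simp: reflection_angle_def min_def split: if_splits)
    consider "\<alpha> \<le> pi" "\<beta> \<le> pi" | "pi < \<alpha>" "pi < \<beta>"
      using lt close by (auto simp: axis_angle_def split: if_splits)
    then show ?thesis
    proof cases
      case 1
      have "a*(\<alpha>+\<beta>)/2 \<le> (\<alpha>+\<beta>)/2" using a \<alpha> \<beta> by (simp add: mult_left_le_one_le)
      then show ?thesis using 1 lt a \<alpha> \<beta> by (intro sin_sq_mono) (auto simp: refl axis_angle_def)
    next
      case 2
      then have "axis_angle \<alpha> = 2*pi - \<alpha>" "axis_angle \<beta> = 2*pi - \<beta>"
        by (auto simp: axis_angle_def)
      then have refl2: "reflection_angle \<alpha> \<beta> / 2 = 2*pi - (\<alpha>+\<beta>)/2"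
        and small: "2*pi - (\<alpha>+\<beta>)/2 < pi/2"
        using lt unfolding refl by (auto simp: field_simps)
      have "pi - a*(\<alpha>+\<beta>)/2 = a * (pi/a - (\<alpha>+\<beta>)/2)" using a by (simp add: field_simps)
      also have "\<dots> \<le> pi/a - (\<alpha>+\<beta>)/2"
        using a \<alpha> \<beta> by (intro mult_left_le_one_le) (auto simp: field_simps)
      also have "\<dots> \<le> reflection_angle \<alpha> \<beta> / 2" using refl2 th by linarith
      finally have "sin (pi - a*(\<alpha>+\<beta>)/2) ^ 2 \<le> sin (reflection_angle \<alpha> \<beta> / 2) ^ 2"
        using refl2 small a \<alpha> \<beta> by (intro sin_sq_mono) (auto simp: field_simps)
      then show ?thesis by simp
    qed
  qed
qed

lemma mult_sin_sq_le_sin_sq_far: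
  fixes a \<alpha> \<beta> :: real
  assumes a: "0 \<le> a" and \<alpha>: "0 < \<alpha>" "\<alpha> < pi/a" and \<beta>: "0 < \<beta>" "\<beta> < pi/a"
    and far: "pi \<le> \<bar>\<alpha> - \<beta>\<bar>"
  shows "a^2 * sin (a*(\<alpha>+\<beta>)/2) ^ 2 \<le> sin (a*(\<alpha>-\<beta>)/2) ^ 2"
proof -
  define d where "d = \<bar>\<alpha> - \<beta>\<bar>"
  have a0: "0 < a" using a \<alpha> by (cases "a = 0") auto
  have "d < pi/a" using \<alpha> \<beta> by (auto simp: d_def)
  then have "a * d < pi" using a0 by (simp add: field_simps)
  then have "a * d < 1 * d" using far by (simp add: d_def)
  then have "a < 1" by (rule mult_right_less_imp_less) (simp add: d_def)
  then have a1: "a \<le> 1" by simp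
  have "a \<le> sin (a * (pi/2))" using mult_sin_le_sin_mult[OF a a1, of "pi/2"] by simp
  also have "\<dots> \<le> sin (a * d / 2)"
  proof -
    have "0 \<le> a * pi" "a * pi \<le> a * d" using far a by (auto simp: d_def intro: mult_left_mono)
    then show ?thesis using \<open>a * d < pi\<close> by (intro sin_monotone_2pi_le) auto
  qed
  finally have "a^2 \<le> sin (a * d / 2)^2" using a by (intro power_mono) auto
  moreover have "sin (a * d / 2)^2 = sin (a*(\<alpha>-\<beta>)/2)^2"
    using sin_sq_abs[of "a*(\<alpha>-\<beta>)/2"] a by (simp add: d_def abs_mult)
  moreover have "a^2 * sin (a*(\<alpha>+\<beta>)/2) ^ 2 \<le> a^2"
    by (rule mult_right_le_one_le) (auto simp: sin_sq_le_one)
  ultimately show ?thesis by linarith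
qed

lemma sin_sq_reflection_bounds:
  fixes a d \<sigma> :: real
  assumes a: "0 \<le> a" "a \<le> 1" and d: "\<bar>d\<bar> \<le> \<sigma>" "\<sigma> \<le> pi"
  shows "sin (d/2)^2 \<le> sin (\<sigma>/2)^2"
    and "a^2 * (sin (\<sigma>/2)^2 - sin (d/2)^2) \<le> sin (a*\<sigma>/2)^2 - sin (a*d/2)^2"
    and "sin (a*d/2)^2 * sin (\<sigma>/2)^2 \<le> sin (d/2)^2 * sin (a*\<sigma>/2)^2"
proof -
  have abs: "sin (d/2)^2 = sin (\<bar>d\<bar>/2)^2" "sin (a*d/2)^2 = sin (a*(\<bar>d\<bar>/2))^2"
    using sin_sq_abs[of "d/2"] sin_sq_abs[of "a*d/2"] a by (simp_all add: abs_mult)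
  have d0: "0 \<le> \<bar>d\<bar>/2" "\<bar>d\<bar>/2 \<le> \<sigma>/2" "\<sigma>/2 \<le> pi/2" using d by auto
  show "sin (d/2)^2 \<le> sin (\<sigma>/2)^2" unfolding abs using d0 by (intro sin_sq_mono) auto
  show "a^2 * (sin (\<sigma>/2)^2 - sin (d/2)^2) \<le> sin (a*\<sigma>/2)^2 - sin (a*d/2)^2"
    using sin_mult_sq_diff_mono[OF a d0] unfolding abs by (simp add: algebra_simps)
  have "sin (a*(\<bar>d\<bar>/2)) * sin (\<sigma>/2) \<le> sin (a*(\<sigma>/2)) * sin (\<bar>d\<bar>/2)"
    using d0 pi_gt_zero by (intro sin_mult_ratio_mono[OF a]) linarith+
  moreover have "0 \<le> sin (a*(\<bar>d\<bar>/2)) * sin (\<sigma>/2)"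
  proof -
    have "a*(\<bar>d\<bar>/2) \<le> \<bar>d\<bar>/2" using a d0 by (simp add: mult_left_le_one_le)
    then show ?thesis using a d0 by (intro mult_nonneg_nonneg sin_ge_zero) auto
  qed
  ultimately have "(sin (a*(\<bar>d\<bar>/2)) * sin (\<sigma>/2))^2 \<le> (sin (a*(\<sigma>/2)) * sin (\<bar>d\<bar>/2))^2"
    by (intro power_mono) auto
  then show "sin (a*d/2)^2 * sin (\<sigma>/2)^2 \<le> sin (d/2)^2 * sin (a*\<sigma>/2)^2"
    unfolding abs by (simp add: power_mult_distrib algebra_simps)
qed

lemma sin_sq_vertex_bounds:
  fixes a d w :: real
  assumes a: "0 \<le> a" "a \<le> 1" and d: "\<bar>d\<bar> \<le> pi" and w: "a*(pi/2) \<le> w" "w \<le> pi - a*(pi/2)"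
  shows "a^2 * (1 - sin (d/2)^2) \<le> sin w ^ 2 - sin (a*d/2)^2"
    and "sin (a*d/2)^2 \<le> sin (d/2)^2 * sin w ^ 2"
proof -
  have "0 \<le> a*pi" using a by simp
  have "sin (a*(pi/2)) \<le> sin w"
  proof (cases "w \<le> pi/2")
    case True
    then show ?thesis using w \<open>0 \<le> a*pi\<close> by (intro sin_monotone_2pi_le) auto
  next
    case False
    have "sin (a*(pi/2)) \<le> sin (pi - w)"
      using w False \<open>0 \<le> a*pi\<close> by (intro sin_monotone_2pi_le) auto
    then show ?thesis by simp
  qed
  moreover have "0 \<le> sin (a*(pi/2))"
    using a by (intro sin_ge_zero) (auto simp: mult_left_le_one_le order_trans[of _ "pi/2" pi])
  ultimately have w_ge: "sin (a*pi/2)^2 \<le> sin w ^ 2" by (simp add: power_mono)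
  note refl = sin_sq_reflection_bounds[OF a d order_refl]
  show "a^2 * (1 - sin (d/2)^2) \<le> sin w ^ 2 - sin (a*d/2)^2" using refl(2) w_ge by simp
  have "sin (d/2)^2 * sin (a*pi/2)^2 \<le> sin (d/2)^2 * sin w ^ 2" using w_ge by (simp add: mult_left_mono)
  then show "sin (a*d/2)^2 \<le> sin (d/2)^2 * sin w ^ 2" using refl(3) by simp
qed

lemma mult_polar_dist_sq_le:
  fixes k r p h h' :: real
  assumes "0 \<le> r" "0 \<le> p" "0 \<le> k" "k \<le> 1" "k * sin (h'/2)^2 \<le> sin (h/2)^2"
  shows "k * polar_dist_sq r p h' \<le> polar_dist_sq r p h"
proof -
  have "k * (p - r)^2 \<le> (p - r)^2" using assms by (simp add: mult_left_le_one_le)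
  moreover have "4*r*p * (k * sin (h'/2)^2) \<le> 4*r*p * sin (h/2)^2"
    using assms by (intro mult_left_mono) auto
  ultimately show ?thesis unfolding polar_dist_sq_half_angle by (simp add: algebra_simps)
qed

lemma lower_angle_estimate:
  fixes a r p \<alpha> \<beta> F2 :: real
  assumes a: "1/2 < a" "a < 1" and rp: "0 < r" "0 < p"
    and \<alpha>: "0 < \<alpha>" "\<alpha> < pi/a" and \<beta>: "0 < \<beta>" "\<beta> < pi/a"
    and F2: "polar_dist_sq r p (\<alpha> - \<beta>) \<le> F2" "polar_dist_sq r p (reflection_angle \<alpha> \<beta>) \<le> F2"
  shows "a^2 * (polar_dist_sq r p (\<alpha> - \<beta>) * polar_dist_sq (r powr a) (p powr a) (a*(\<alpha>+\<beta>)))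
      \<le> F2 * polar_dist_sq (r powr a) (p powr a) (a*(\<alpha>-\<beta>))"
proof (cases "pi \<le> \<bar>\<alpha> - \<beta>\<bar>")
  case True
  have "a^2 * polar_dist_sq (r powr a) (p powr a) (a*(\<alpha>+\<beta>))
      \<le> polar_dist_sq (r powr a) (p powr a) (a*(\<alpha>-\<beta>))"
    using a \<alpha> \<beta> True mult_sin_sq_le_sin_sq_far[of a \<alpha> \<beta>]
    by (intro mult_polar_dist_sq_le) (auto simp: power_le_one)
  then have "a^2 * (polar_dist_sq r p (\<alpha> - \<beta>) * polar_dist_sq (r powr a) (p powr a) (a*(\<alpha>+\<beta>)))
      \<le> polar_dist_sq r p (\<alpha> - \<beta>) * polar_dist_sq (r powr a) (p powr a) (a*(\<alpha>-\<beta>))"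
    by (metis mult.left_commute mult_left_mono polar_dist_sq_nonneg)
  also have "\<dots> \<le> F2 * polar_dist_sq (r powr a) (p powr a) (a*(\<alpha>-\<beta>))"
    using F2 by (intro mult_right_mono polar_dist_sq_nonneg)
  finally show ?thesis .
next
  case False
  have "pi/a < 2*pi" using a by (simp add: field_simps)
  then have "\<bar>\<alpha> - \<beta>\<bar> \<le> 2*pi" using \<alpha> \<beta> by linarith
  then have "a^2 * (polar_dist_sq r p (\<alpha> - \<beta>) * polar_dist_sq (r powr a) (p powr a) (a*(\<alpha>+\<beta>)))
      \<le> polar_dist_sq r p (reflection_angle \<alpha> \<beta>) * polar_dist_sq (r powr a) (p powr a) (a*(\<alpha>-\<beta>))"
    using a rp \<alpha> \<beta> False
    by (intro polar_dist_sq_powr_lower_comparison sin_sq_le_sin_sq_reflection_angle mult_sin_half_sq_le) auto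
  also have "\<dots> \<le> F2 * polar_dist_sq (r powr a) (p powr a) (a*(\<alpha>-\<beta>))"
    using F2 by (intro mult_right_mono polar_dist_sq_nonneg)
  finally show ?thesis .
qed

lemma lower_angle_estimate_reflected:
  fixes a r p \<alpha> \<beta> F2 :: real
  assumes a: "1/2 < a" "a < 1" and rp: "0 < r" "0 < p"
    and \<alpha>: "0 < \<alpha>" "\<alpha> < pi/a" and \<beta>: "0 < \<beta>" "\<beta> < pi/a"
    and F2: "polar_dist_sq r p (\<alpha> - \<beta>) \<le> F2"
      "polar_dist_sq r p (reflection_angle (pi/a - \<alpha>) (pi/a - \<beta>)) \<le> F2"
  shows "a^2 * (polar_dist_sq r p (\<alpha> - \<beta>) * polar_dist_sq (r powr a) (p powr a) (a*(\<alpha>+\<beta>)))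
      \<le> F2 * polar_dist_sq (r powr a) (p powr a) (a*(\<alpha>-\<beta>))"
proof -
  have "(pi/a - \<alpha>) - (pi/a - \<beta>) = -(\<alpha> - \<beta>)" "a*((pi/a - \<alpha>) - (pi/a - \<beta>)) = -(a*(\<alpha>-\<beta>))"
    "a*((pi/a - \<alpha>) + (pi/a - \<beta>)) = 2*pi - a*(\<alpha>+\<beta>)"
    using a by (auto simp: field_simps)
  then have e: "polar_dist_sq r p ((pi/a - \<alpha>) - (pi/a - \<beta>)) = polar_dist_sq r p (\<alpha> - \<beta>)"
    "polar_dist_sq R P (a*((pi/a - \<alpha>) - (pi/a - \<beta>))) = polar_dist_sq R P (a*(\<alpha>-\<beta>))"
    "polar_dist_sq R P (a*((pi/a - \<alpha>) + (pi/a - \<beta>))) = polar_dist_sq R P (a*(\<alpha>+\<beta>))"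
    for R P by (simp_all only: polar_dist_sq_minus polar_dist_sq_two_pi_minus)
  have "a^2 * (polar_dist_sq r p ((pi/a - \<alpha>) - (pi/a - \<beta>))
        * polar_dist_sq (r powr a) (p powr a) (a*((pi/a - \<alpha>) + (pi/a - \<beta>))))
      \<le> F2 * polar_dist_sq (r powr a) (p powr a) (a*((pi/a - \<alpha>) - (pi/a - \<beta>)))"
    using \<alpha> \<beta> F2(2) F2(1)[folded e(1)] by (intro lower_angle_estimate[OF a rp]) auto
  then show ?thesis by (simp only: e)
qed

lemma upper_angle_estimate_reflection:
  fixes a r p \<alpha> \<beta> \<sigma> :: real
  assumes a: "0 \<le> a" "a \<le> 1" and rp: "0 < r" "0 < p"
    and \<sigma>: "\<bar>\<alpha> - \<beta>\<bar> \<le> \<sigma>" "\<sigma> \<le> pi" and sin_eq: "sin (a*(\<alpha>+\<beta>)/2)^2 = sin (a*\<sigma>/2)^2"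
  shows "polar_dist_sq (r powr a) (p powr a) (a*(\<alpha>-\<beta>)) * polar_dist_sq r p \<sigma>
      \<le> polar_dist_sq r p (\<alpha>-\<beta>) * polar_dist_sq (r powr a) (p powr a) (a*(\<alpha>+\<beta>))"
  using sin_sq_reflection_bounds[OF a \<sigma>] sin_eq
  by (intro polar_dist_sq_powr_upper_comparison[OF a rp]) simp_all

lemma upper_angle_estimate_vertex:
  fixes a r p \<alpha> \<beta> :: real
  assumes a: "0 \<le> a" "a \<le> 1" and rp: "0 < r" "0 < p"
    and "\<bar>\<alpha> - \<beta>\<bar> \<le> pi" "a*(pi/2) \<le> a*(\<alpha>+\<beta>)/2" "a*(\<alpha>+\<beta>)/2 \<le> pi - a*(pi/2)"
  shows "polar_dist_sq (r powr a) (p powr a) (a*(\<alpha>-\<beta>)) * polar_dist_sq r p pi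
      \<le> polar_dist_sq r p (\<alpha>-\<beta>) * polar_dist_sq (r powr a) (p powr a) (a*(\<alpha>+\<beta>))"
  using sin_sq_vertex_bounds[OF a assms(5-7)] sin_sq_le_one[of "(\<alpha>-\<beta>)/2"]
  by (intro polar_dist_sq_powr_upper_comparison[OF a rp]) simp_all

section \<open>Geometry of the sector\<close>

lemma arg2pi_eq_Arg2pi: "arg2pi z = Arg2pi z"
proof (cases "z = 0")
  case True
  then show ?thesis by (simp add: arg2pi_def Arg_zero)
next
  case False
  have "cis (Arg z + 2*pi) = cis (Arg z)" by (simp add: complex_eq_iff)
  then have "exp (\<i> * of_real (arg2pi z)) = exp (\<i> * of_real (Arg z))"
    by (simp add: arg2pi_def cis_conv_exp[symmetric])
  moreover have "0 \<le> arg2pi z" "arg2pi z < 2*pi"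
    using mpi_less_Arg[of z] Arg_le_pi[of z] by (auto simp: arg2pi_def)
  ultimately show ?thesis
    using Arg_eq[OF False] False by (intro Arg2pi_unique[symmetric, of "norm z"]) auto
qed

lemma rcis_cmod_arg2pi: "rcis (cmod z) (arg2pi z) = z"
  using Arg2pi[of z] unfolding arg2pi_eq_Arg2pi is_Arg_def rcis_def cis_conv_exp by simp

lemma arg2pi_rcis:
  assumes "0 < r" "0 \<le> \<phi>" "\<phi> < 2*pi"
  shows "arg2pi (rcis r \<phi>) = \<phi>"
  unfolding arg2pi_eq_Arg2pi
  by (rule Arg2pi_unique[of r]) (use assms in \<open>auto simp: rcis_def cis_conv_exp\<close>)

lemma cpow_rcis_arg2pi: "cpow z a = rcis (cmod z powr a) (a * arg2pi z)"
  by (simp add: cpow_def rcis_def)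

lemma sector_polar_coords:
  assumes "x \<in> sector \<theta>"
  obtains r \<alpha> where "0 < r" "0 < \<alpha>" "\<alpha> < \<theta>" "x = rcis r \<alpha>"
    "\<And>a. cpow x a = rcis (r powr a) (a * \<alpha>)"
  using assms by (intro that[of "cmod x" "arg2pi x"]) (auto simp: sector_def rcis_cmod_arg2pi cpow_rcis_arg2pi)

lemma angle_in_sector_iff:
  fixes \<theta> \<phi> :: real
  assumes th: "pi < \<theta>" "\<theta> < 2*pi" and \<phi>: "0 \<le> \<phi>" "\<phi> < 2*pi"
  shows "0 < \<phi> \<and> \<phi> < \<theta> \<longleftrightarrow> 0 < sin \<phi> \<or> sin (\<phi> - \<theta>) < 0"
proof -
  have minus: "sin (\<phi> - \<theta>) = - sin (\<theta> - \<phi>)" by (metis minus_diff_eq sin_minus)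
  have "0 < sin \<phi> \<or> sin (\<phi> - \<theta>) < 0" if "0 < \<phi>" "\<phi> < \<theta>"
    using that th sin_gt_zero[of \<phi>] sin_gt_zero[of "\<theta> - \<phi>"] by (cases "\<phi> < pi") (auto simp: minus)
  moreover have "0 < \<phi> \<and> \<phi> < \<theta>" if "0 < sin \<phi> \<or> sin (\<phi> - \<theta>) < 0"
  proof -
    have "sin \<phi> \<le> 0" if "pi \<le> \<phi>" using sin_le_zero that \<phi> by blast
    moreover have "0 \<le> sin (\<phi> - \<theta>)" if "\<theta> \<le> \<phi>" using sin_ge_zero[of "\<phi> - \<theta>"] that \<phi> th by simp
    moreover have "0 < sin (0 - \<theta>)" using sin_lt_zero[OF th] by simp
    ultimately show ?thesis using that \<phi> th by (cases "\<phi> = 0") force+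
  qed
  ultimately show ?thesis by blast
qed

lemma mem_sector_iff:
  assumes th: "pi < \<theta>" "\<theta> < 2*pi"
  shows "z \<in> sector \<theta> \<longleftrightarrow> 0 < Im z \<or> Im (z * cis (-\<theta>)) < 0"
proof (cases "z = 0")
  case True
  then show ?thesis by (simp add: sector_def)
next
  case False
  define r \<phi> where "r = cmod z" and "\<phi> = arg2pi z"
  have r: "0 < r" using False by (simp add: r_def)
  have "z = rcis r \<phi>" unfolding r_def \<phi>_def by (rule rcis_cmod_arg2pi[symmetric])
  then have "Im z = r * sin \<phi>" "Im (z * cis (-\<theta>)) = r * sin (\<phi> - \<theta>)"
    by (simp_all add: rcis_def mult.assoc cis_mult)
  then have "0 < Im z \<or> Im (z * cis (-\<theta>)) < 0 \<longleftrightarrow> 0 < sin \<phi> \<or> sin (\<phi> - \<theta>) < 0"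
    using r by (simp add: zero_less_mult_iff mult_less_0_iff)
  also have "\<dots> \<longleftrightarrow> 0 < \<phi> \<and> \<phi> < \<theta>"
    using angle_in_sector_iff[OF th] Arg2pi[of z] by (simp add: \<phi>_def arg2pi_eq_Arg2pi)
  finally show ?thesis using False by (simp add: sector_def \<phi>_def)
qed

lemma open_sector:
  assumes th: "pi < \<theta>" "\<theta> < 2*pi"
  shows "open (sector \<theta>)"
proof -
  have "sector \<theta> = {z. 0 < Im z} \<union> (\<lambda>z. z * cis (-\<theta>)) -` {w. Im w < 0}"
    using mem_sector_iff[OF th] by auto
  then show ?thesis
    by (simp only:) (intro open_Un open_halfspace_Im_gt open_vimage open_halfspace_Im_lt continuous_intros)
qed

lemma frontier_sector_imp_ray:
  assumes th: "pi < \<theta>" "\<theta> < 2*pi" and z: "z \<in> frontier (sector \<theta>)"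
  shows "\<exists>t\<ge>0. z = rcis t 0 \<or> z = rcis t \<theta>"
proof -
  define c where "c = cis (-\<theta>)"
  have zS: "z \<notin> sector \<theta>" using z open_sector[OF th] by (simp add: frontier_def interior_open)
  have "closure (sector \<theta>) \<subseteq> {z. 0 \<le> Im z} \<union> (\<lambda>z. z * c) -` {w. Im w \<le> 0}"
  proof (rule closure_minimal)
    show "sector \<theta> \<subseteq> {z. 0 \<le> Im z} \<union> (\<lambda>z. z * c) -` {w. Im w \<le> 0}"
      using mem_sector_iff[OF th] by (auto simp: c_def)
    show "closed ({z. 0 \<le> Im z} \<union> (\<lambda>z. z * c) -` {w. Im w \<le> 0})"
      by (intro closed_Un closed_halfspace_Im_ge closed_vimage closed_halfspace_Im_le continuous_intros)
  qed
  moreover have "z \<in> closure (sector \<theta>)" using z by (simp add: frontier_def)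
  ultimately have cl: "0 \<le> Im z \<or> Im (z * c) \<le> 0" by auto
  have ns: "\<not> 0 < Im z" "\<not> Im (z * c) < 0" using zS mem_sector_iff[OF th, of z] by (auto simp: c_def)
  have sth: "sin \<theta> < 0" by (rule sin_lt_zero[OF th])
  have Imc: "Im (w * c) = Im w * cos \<theta> - Re w * sin \<theta>" for w by (simp add: c_def)
  show ?thesis
  proof (cases "Im z = 0")
    case True
    then have "0 \<le> - Re z * sin \<theta>" using ns Imc[of z] by simp
    then have "0 \<le> Re z" using sth by (simp add: mult_le_0_iff)
    moreover have "z = rcis (Re z) 0" using True by (simp add: complex_eq_iff)
    ultimately show ?thesis by blast
  next
    case False
    then have i0: "Im (z * c) = 0" using cl ns by auto
    define t where "t = Re (z * c)"
    have zc: "z * c = rcis t 0" using i0 by (simp add: complex_eq_iff t_def)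
    have "z = z * c * cis \<theta>" by (simp add: c_def mult.assoc cis_mult)
    then have zz: "z = rcis t \<theta>" unfolding zc by (simp add: rcis_def)
    have "Im z \<le> 0" using ns by simp
    then have "t * sin \<theta> \<le> 0" using zz by (metis Im_rcis)
    then have "0 \<le> t" using sth by (simp add: mult_le_0_iff)
    then show ?thesis using zz by blast
  qed
qed

lemma ray_in_frontier_sector:
  assumes th: "pi < \<theta>" "\<theta> < 2*pi" and t: "0 \<le> t"
  shows "rcis t 0 \<in> frontier (sector \<theta>)" "rcis t \<theta> \<in> frontier (sector \<theta>)"
proof -
  have sth: "sin \<theta> < 0" by (rule sin_lt_zero[OF th])
  have int: "interior (sector \<theta>) = sector \<theta>" using open_sector[OF th] by (simp add: interior_open)
  have "t * sin \<theta> \<le> 0" using sth t by (simp add: mult_nonneg_nonpos)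
  then have n1: "rcis t 0 \<notin> sector \<theta>"
    using mem_sector_iff[OF th, of "rcis t 0"] by (simp add: rcis_def)
  have c1: "rcis t 0 \<in> closure (sector \<theta>)"
    unfolding closure_approachable
  proof (intro allI impI)
    fix e :: real assume e: "0 < e"
    have "complex_of_real t + \<i> * of_real (e/2) \<in> sector \<theta>" using mem_sector_iff[OF th] e by simp
    moreover have "dist (complex_of_real t + \<i> * of_real (e/2)) (rcis t 0) < e"
      using e by (simp add: dist_norm norm_mult)
    ultimately show "\<exists>y\<in>sector \<theta>. dist y (rcis t 0) < e" by blast
  qed
  show "rcis t 0 \<in> frontier (sector \<theta>)" using n1 c1 int by (simp add: frontier_def)
  have e1: "rcis t \<theta> * cis (-\<theta>) = of_real t" by (simp add: rcis_def mult.assoc cis_mult)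
  have "t * sin \<theta> \<le> 0" using sth t by (simp add: mult_nonneg_nonpos)
  then have n2: "rcis t \<theta> \<notin> sector \<theta>"
    using mem_sector_iff[OF th, of "rcis t \<theta>"] e1 by simp
  have c2: "rcis t \<theta> \<in> closure (sector \<theta>)"
    unfolding closure_approachable
  proof (intro allI impI)
    fix e :: real assume e: "0 < e"
    define y where "y = (complex_of_real t - \<i> * of_real (e/2)) * cis \<theta>"
    have "y * cis (-\<theta>) = complex_of_real t - \<i> * of_real (e/2)"
      by (simp add: y_def mult.assoc cis_mult)
    then have "y \<in> sector \<theta>" using mem_sector_iff[OF th, of y] e by simp
    moreover have "y - rcis t \<theta> = (- \<i> * of_real (e/2)) * cis \<theta>"
      by (simp add: y_def rcis_def algebra_simps)
    then have "dist y (rcis t \<theta>) < e" using e by (simp add: dist_norm norm_mult)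
    ultimately show "\<exists>y\<in>sector \<theta>. dist y (rcis t \<theta>) < e" by blast
  qed
  show "rcis t \<theta> \<in> frontier (sector \<theta>)" using n2 c2 int by (simp add: frontier_def)
qed

lemma frontier_sector_nonempty:
  assumes "pi < \<theta>" "\<theta> < 2*pi"
  shows "frontier (sector \<theta>) \<noteq> {}"
  using ray_in_frontier_sector(1)[OF assms order_refl] by blast

lemma path_via_ray_ge:
  fixes t r p A B \<alpha> \<beta> \<phi> :: real
  assumes "0 \<le> t" "0 \<le> r" "0 \<le> p" "0 \<le> A" "A \<le> pi" "0 \<le> B" "B \<le> pi"
    and cA: "cos (\<alpha> - \<phi>) = cos A" and cB: "cos (\<beta> - \<phi>) = cos B"
  shows "polar_dist_sq r p (min pi (A+B))
      \<le> (cmod (rcis r \<alpha> - rcis t \<phi>) + cmod (rcis t \<phi> - rcis p \<beta>))^2"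
proof -
  \<comment> \<open>With the ray rotated onto the positive axis, compare with the mirror image of the second
    point, turned back to the angle \<open>-B'\<close> so that \<open>A + B' \<le> pi\<close>: this does not increase its
    distance from the ray point.\<close>
  define B' where "B' = min B (pi - A)"
  have B': "0 \<le> B'" "B' \<le> B" "A + B' = min pi (A+B)" using assms by (auto simp: B'_def)
  have "cmod (rcis r \<alpha> - rcis t \<phi>) = cmod (rcis r A - rcis t 0)"
    unfolding norm_rcis_diff using cA by (simp add: polar_dist_sq_def)
  moreover have "cmod (rcis t 0 - rcis p (-B')) \<le> cmod (rcis t \<phi> - rcis p \<beta>)"
  proof -
    have "cos B \<le> cos B'" using B' assms by (intro cos_monotone_0_pi_le) auto
    then have "t * p * cos B \<le> t * p * cos B'" using assms by (intro mult_left_mono) auto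
    then have "polar_dist_sq t p (0 - (- B')) \<le> polar_dist_sq t p (\<phi> - \<beta>)"
      using cB by (simp add: polar_dist_sq_def algebra_simps cos_diff[symmetric]
          cos_minus[of "\<phi> - \<beta>", symmetric])
    then show ?thesis unfolding norm_rcis_diff by (rule real_sqrt_le_mono)
  qed
  moreover have "cmod (rcis r A - rcis p (-B'))
      \<le> cmod (rcis r A - rcis t 0) + cmod (rcis t 0 - rcis p (-B'))"
    using norm_triangle_ineq[of "rcis r A - rcis t 0" "rcis t 0 - rcis p (-B')"] by simp
  moreover have "cmod (rcis r A - rcis p (-B')) = sqrt (polar_dist_sq r p (min pi (A+B)))"
    unfolding norm_rcis_diff using B' by simp
  ultimately have "sqrt (polar_dist_sq r p (min pi (A+B)))
      \<le> cmod (rcis r \<alpha> - rcis t \<phi>) + cmod (rcis t \<phi> - rcis p \<beta>)"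
    by linarith
  then show ?thesis by (rule sqrt_le_D)
qed

lemma frontier_sector_path_ge:
  fixes \<theta> r p \<alpha> \<beta> :: real
  assumes th: "pi < \<theta>" "\<theta> < 2*pi" and rp: "0 \<le> r" "0 \<le> p"
    and \<alpha>: "0 < \<alpha>" "\<alpha> < \<theta>" and \<beta>: "0 < \<beta>" "\<beta> < \<theta>" and z: "z \<in> frontier (sector \<theta>)"
  defines "F2 \<equiv> (cmod (rcis r \<alpha> - z) + cmod (z - rcis p \<beta>))^2"
  shows "polar_dist_sq r p (reflection_angle \<alpha> \<beta>) \<le> F2
    \<or> polar_dist_sq r p (reflection_angle (\<theta> - \<alpha>) (\<theta> - \<beta>)) \<le> F2"
proof -
  obtain t where t: "0 \<le> t" "z = rcis t 0 \<or> z = rcis t \<theta>"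
    using frontier_sector_imp_ray[OF th z] by blast
  note ax = axis_angle_bounds[of \<alpha>] axis_angle_bounds[of \<beta>]
    axis_angle_bounds[of "\<theta> - \<alpha>"] axis_angle_bounds[of "\<theta> - \<beta>"]
  from t(2) show ?thesis
  proof
    assume z0: "z = rcis t 0"
    show ?thesis unfolding F2_def z0 reflection_angle_def
      using t(1) rp \<alpha> \<beta> th ax by (intro disjI1 path_via_ray_ge) auto
  next
    assume z\<theta>: "z = rcis t \<theta>"
    have "cos (\<alpha> - \<theta>) = cos (\<theta> - \<alpha>)" "cos (\<beta> - \<theta>) = cos (\<theta> - \<beta>)"
      by (simp_all add: cos_minus[of "\<theta> - _", symmetric])
    then show ?thesis unfolding F2_def z\<theta> reflection_angle_def
      using t(1) rp \<alpha> \<beta> th ax by (intro disjI2 path_via_ray_ge) auto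
  qed
qed

text \<open>The last hypothesis says that the segment from \<open>p\<close> to \<open>q\<close> crosses the real axis at a
  nonnegative point.\<close>
lemma segment_meets_nonneg_axis:
  fixes p q :: complex
  assumes "0 < Im p" "Im q < 0" "0 \<le> Re p * (- Im q) + Re q * Im p"
  shows "\<exists>t\<ge>0. cmod (p - rcis t 0) + cmod (rcis t 0 - q) = cmod (p - q)"
proof -
  define l where "l = Im p / (Im p - Im q)"
  have l: "0 < l" "l < 1" using assms by (auto simp: l_def field_simps)
  define w where "w = p + of_real l * (q - p)"
  have "Im w = 0" using assms by (simp add: w_def l_def field_simps)
  then have w: "w = rcis (Re w) 0" by (simp add: complex_eq_iff)
  have "Re w = (Re p * (- Im q) + Re q * Im p) / (Im p - Im q)"
    using assms by (simp add: w_def l_def field_simps)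
  then have "0 \<le> Re w" using assms by simp
  have "p - w = of_real l * (p - q)" "w - q = of_real (1 - l) * (p - q)"
    by (simp_all add: w_def algebra_simps)
  then have "cmod (p - w) = l * cmod (p - q)" "cmod (w - q) = (1 - l) * cmod (p - q)"
    using l by (simp_all add: norm_mult del: of_real_diff)
  then have "cmod (p - w) + cmod (w - q) = cmod (p - q)" by (simp add: algebra_simps)
  then show ?thesis using \<open>0 \<le> Re w\<close> w by metis
qed

lemma exists_axis_path_reflection:
  fixes r p A B :: real
  assumes "0 < r" "0 < p" "0 < A" "0 < B" "A + B \<le> pi"
  shows "\<exists>t\<ge>0. (cmod (rcis r A - rcis t 0) + cmod (rcis t 0 - rcis p B))^2 = polar_dist_sq r p (A+B)"
proof -
  have "0 < sin A" "0 < sin B" "0 \<le> sin (A+B)" using assms by (auto intro!: sin_gt_zero sin_ge_zero)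
  then have "0 \<le> (r * p) * sin (A + B)" using assms by simp
  then have "0 \<le> Re (rcis r A) * (- Im (rcis p (-B))) + Re (rcis p (-B)) * Im (rcis r A)"
    by (simp add: sin_add algebra_simps)
  then obtain t where "0 \<le> t"
    "cmod (rcis r A - rcis t 0) + cmod (rcis t 0 - rcis p (-B)) = cmod (rcis r A - rcis p (-B))"
    using segment_meets_nonneg_axis[of "rcis r A" "rcis p (-B)"] assms \<open>0 < sin A\<close> \<open>0 < sin B\<close> by auto
  moreover have "cmod (rcis t 0 - rcis p (-B)) = cmod (rcis t 0 - rcis p B)"
    unfolding norm_rcis_diff by (simp add: polar_dist_sq_minus[of t p B, symmetric])
  ultimately show ?thesis by (metis norm_rcis_diff_sq diff_minus_eq_add)
qed

lemma exists_axis_path_straight: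
  fixes r p \<alpha> \<beta> :: real
  assumes "0 < r" "0 < p" "0 < \<alpha>" "\<alpha> + pi \<le> \<beta>" "\<beta> < 2*pi"
  shows "\<exists>t\<ge>0. cmod (rcis r \<alpha> - rcis t 0) + cmod (rcis t 0 - rcis p \<beta>) = cmod (rcis r \<alpha> - rcis p \<beta>)"
proof -
  have "0 < sin \<alpha>" "sin \<beta> < 0" using assms by (auto intro!: sin_gt_zero sin_lt_zero)
  have "0 \<le> sin (\<alpha> - \<beta> + 2*pi)" using assms by (intro sin_ge_zero) auto
  then have "0 \<le> (r * p) * sin (\<alpha> - \<beta>)" using assms by (simp only: sin_periodic) simp
  then have "0 \<le> Re (rcis r \<alpha>) * (- Im (rcis p \<beta>)) + Re (rcis p \<beta>) * Im (rcis r \<alpha>)"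
    by (simp add: sin_diff algebra_simps)
  then show ?thesis
    using segment_meets_nonneg_axis[of "rcis r \<alpha>" "rcis p \<beta>"] assms \<open>0 < sin \<alpha>\<close> \<open>sin \<beta> < 0\<close>
    by (auto simp: mult_pos_neg)
qed

lemma frontier_sector_path_straight:
  fixes \<theta> r p \<alpha> \<beta> :: real
  assumes th: "pi < \<theta>" "\<theta> < 2*pi" and rp: "0 < r" "0 < p"
    and \<alpha>: "0 < \<alpha>" "\<alpha> < \<theta>" and \<beta>: "0 < \<beta>" "\<beta> < \<theta>" and far: "pi \<le> \<bar>\<alpha> - \<beta>\<bar>"
  shows "\<exists>z\<in>frontier (sector \<theta>).
    cmod (rcis r \<alpha> - z) + cmod (z - rcis p \<beta>) = cmod (rcis r \<alpha> - rcis p \<beta>)"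
proof (cases "\<alpha> \<le> \<beta>")
  case True
  then obtain t where "0 \<le> t"
    "cmod (rcis r \<alpha> - rcis t 0) + cmod (rcis t 0 - rcis p \<beta>) = cmod (rcis r \<alpha> - rcis p \<beta>)"
    using exists_axis_path_straight[of r p \<alpha> \<beta>] rp \<alpha> \<beta> far th by auto
  then show ?thesis using ray_in_frontier_sector(1)[OF th \<open>0 \<le> t\<close>] by blast
next
  case False
  then obtain t where "0 \<le> t"
    "cmod (rcis p \<beta> - rcis t 0) + cmod (rcis t 0 - rcis r \<alpha>) = cmod (rcis p \<beta> - rcis r \<alpha>)"
    using exists_axis_path_straight[of p r \<beta> \<alpha>] rp \<alpha> \<beta> far th by auto
  then show ?thesis using ray_in_frontier_sector(1)[OF th \<open>0 \<le> t\<close>]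
    by (metis add.commute norm_minus_commute)
qed

lemma frontier_sector_reflection_path:
  fixes \<theta> r p \<alpha> \<beta> :: real
  assumes th: "pi < \<theta>" "\<theta> < 2*pi" and rp: "0 < r" "0 < p"
    and \<alpha>: "0 < \<alpha>" "\<alpha> < \<theta>" and \<beta>: "0 < \<beta>" "\<beta> < \<theta>"
  defines "F \<equiv> \<lambda>z. cmod (rcis r \<alpha> - z) + cmod (z - rcis p \<beta>)"
  shows "\<alpha> + \<beta> \<le> pi \<Longrightarrow> \<exists>z\<in>frontier (sector \<theta>). F z ^ 2 = polar_dist_sq r p (\<alpha> + \<beta>)"
    and "2*\<theta> - (\<alpha> + \<beta>) \<le> pi \<Longrightarrow>
      \<exists>z\<in>frontier (sector \<theta>). F z ^ 2 = polar_dist_sq r p (2*\<theta> - (\<alpha> + \<beta>))"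
proof -
  assume "\<alpha> + \<beta> \<le> pi"
  then obtain t where "0 \<le> t" "F (rcis t 0) ^ 2 = polar_dist_sq r p (\<alpha> + \<beta>)"
    using exists_axis_path_reflection[OF rp \<alpha>(1) \<beta>(1)] by (auto simp: F_def)
  then show "\<exists>z\<in>frontier (sector \<theta>). F z ^ 2 = polar_dist_sq r p (\<alpha> + \<beta>)"
    using ray_in_frontier_sector(1)[OF th] by blast
next
  assume "2*\<theta> - (\<alpha> + \<beta>) \<le> pi"
  then obtain t where "0 \<le> t" and t: "(cmod (rcis r (\<theta>-\<alpha>) - rcis t 0) + cmod (rcis t 0 - rcis p (\<theta>-\<beta>)))^2
      = polar_dist_sq r p ((\<theta>-\<alpha>) + (\<theta>-\<beta>))"
    using exists_axis_path_reflection[of r p "\<theta>-\<alpha>" "\<theta>-\<beta>"] rp \<alpha> \<beta> by auto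
  have "F (rcis t \<theta>) = cmod (rcis r (\<theta>-\<alpha>) - rcis t 0) + cmod (rcis t 0 - rcis p (\<theta>-\<beta>))"
    unfolding F_def by (metis norm_rcis_diff_swap norm_minus_commute)
  then have "F (rcis t \<theta>) ^ 2 = polar_dist_sq r p (2*\<theta> - (\<alpha> + \<beta>))" using t by (simp add: algebra_simps)
  then show "\<exists>z\<in>frontier (sector \<theta>). F z ^ 2 = polar_dist_sq r p (2*\<theta> - (\<alpha> + \<beta>))"
    using ray_in_frontier_sector(2)[OF th \<open>0 \<le> t\<close>] by blast
qed

lemma frontier_sector_upper_estimate:
  fixes \<theta> r p \<alpha> \<beta> :: real
  assumes th: "pi < \<theta>" "\<theta> < 2*pi" and rp: "0 < r" "0 < p"
    and \<alpha>: "0 < \<alpha>" "\<alpha> < \<theta>" and \<beta>: "0 < \<beta>" "\<beta> < \<theta>"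
  defines "a \<equiv> pi/\<theta>" and "F \<equiv> \<lambda>z. cmod (rcis r \<alpha> - z) + cmod (z - rcis p \<beta>)"
  shows "\<exists>z\<in>frontier (sector \<theta>). polar_dist_sq (r powr a) (p powr a) (a*(\<alpha>-\<beta>)) * F z ^ 2
      \<le> polar_dist_sq r p (\<alpha>-\<beta>) * polar_dist_sq (r powr a) (p powr a) (a*(\<alpha>+\<beta>))"
proof -
  have a: "0 \<le> a" "a \<le> 1" "a * \<theta> = pi" using th by (auto simp: a_def field_simps)
  let ?lhs = "\<lambda>G. polar_dist_sq (r powr a) (p powr a) (a*(\<alpha>-\<beta>)) * G"
  let ?rhs = "polar_dist_sq r p (\<alpha>-\<beta>) * polar_dist_sq (r powr a) (p powr a) (a*(\<alpha>+\<beta>))"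
  note paths = frontier_sector_reflection_path[OF th rp \<alpha> \<beta>]
  consider "pi \<le> \<bar>\<alpha> - \<beta>\<bar>" | "\<bar>\<alpha> - \<beta>\<bar> < pi" "\<alpha> + \<beta> \<le> pi"
    | "\<bar>\<alpha> - \<beta>\<bar> < pi" "2*\<theta> - (\<alpha> + \<beta>) \<le> pi"
    | "\<bar>\<alpha> - \<beta>\<bar> < pi" "pi \<le> \<alpha> + \<beta>" "pi \<le> 2*\<theta> - (\<alpha> + \<beta>)" by linarith
  then show ?thesis
  proof cases
    case 1
    obtain z where z: "z \<in> frontier (sector \<theta>)" "F z ^ 2 = polar_dist_sq r p (\<alpha>-\<beta>)"
      using frontier_sector_path_straight[OF th rp \<alpha> \<beta> 1] by (auto simp: F_def norm_rcis_diff_sq)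
    have "a * \<alpha> \<le> pi" "a * \<beta> \<le> pi" using a \<alpha> \<beta> by (metis less_imp_le mult_left_mono)+
    then have "polar_dist_sq (r powr a) (p powr a) (a*\<alpha> - a*\<beta>)
        \<le> polar_dist_sq (r powr a) (p powr a) (a*\<alpha> + a*\<beta>)"
      using a \<alpha> \<beta> by (intro polar_dist_sq_diff_le_add) auto
    then have "?lhs (F z ^ 2) \<le> ?rhs"
      unfolding z(2) by (simp add: algebra_simps mult_left_mono polar_dist_sq_nonneg)
    then show ?thesis using z(1) by blast
  next
    case 2
    obtain z where "z \<in> frontier (sector \<theta>)" "F z ^ 2 = polar_dist_sq r p (\<alpha>+\<beta>)"
      using paths(1)[OF 2(2)] unfolding F_def by blast
    moreover have "?lhs (polar_dist_sq r p (\<alpha>+\<beta>)) \<le> ?rhs"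
      using 2 \<alpha> \<beta> by (intro upper_angle_estimate_reflection[OF a(1,2) rp]) auto
    ultimately show ?thesis by metis
  next
    case 3
    have "a * (2*\<theta> - (\<alpha>+\<beta>)) / 2 = pi - a*(\<alpha>+\<beta>)/2" using a by (simp add: field_simps)
    then have "sin (a*(\<alpha>+\<beta>)/2)^2 = sin (a * (2*\<theta> - (\<alpha>+\<beta>)) / 2)^2"
      by (simp only: sin_pi_minus)
    then have "?lhs (polar_dist_sq r p (2*\<theta> - (\<alpha>+\<beta>))) \<le> ?rhs"
      using 3 \<alpha> \<beta> by (intro upper_angle_estimate_reflection[OF a(1,2) rp]) auto
    moreover obtain z where "z \<in> frontier (sector \<theta>)" "F z ^ 2 = polar_dist_sq r p (2*\<theta> - (\<alpha>+\<beta>))"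
      using paths(2)[OF 3(2)] unfolding F_def by blast
    ultimately show ?thesis by metis
  next
    case 4
    have "F (rcis 0 0) ^ 2 = polar_dist_sq r p pi" using rp by (simp add: F_def polar_dist_sq_pi)
    moreover have "?lhs (polar_dist_sq r p pi) \<le> ?rhs"
    proof (rule upper_angle_estimate_vertex[OF a(1,2) rp])
      show "a*(pi/2) \<le> a*(\<alpha>+\<beta>)/2" using 4 a by (simp add: mult_left_mono)
      have "a*(\<alpha>+\<beta>) \<le> a*(2*\<theta> - pi)" using 4 a by (intro mult_left_mono) auto
      moreover have "a*(2*\<theta> - pi) = 2*pi - a*pi" using a(3) by (simp add: algebra_simps)
      ultimately show "a*(\<alpha>+\<beta>)/2 \<le> pi - a*(pi/2)" by linarith
    qed (use 4 in auto)
    ultimately show ?thesis using ray_in_frontier_sector(1)[OF th order_refl] by metis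
  qed
qed

section \<open>The two metrics\<close>

lemma mult_s_metric_leI:
  fixes G :: "complex set"
  assumes ne: "frontier G \<noteq> {}" and t: "0 \<le> t"
    and bound: "\<And>z. z \<in> frontier G \<Longrightarrow> c * cmod (x - y) \<le> t * (cmod (x - z) + cmod (z - y))"
  shows "c * s_metric G x y \<le> t"
proof -
  define D where "D = Inf ((\<lambda>z. cmod (x - z) + cmod (z - y)) ` frontier G)"
  have D0: "0 \<le> D" unfolding D_def using ne by (intro cInf_greatest) auto
  have "c * cmod (x - y) \<le> t * D"
  proof (cases "t = 0")
    case True
    then show ?thesis using bound ne by fastforce
  next
    case False
    then have "c * cmod (x - y) / t \<le> D"
      unfolding D_def using ne t bound by (intro cInf_greatest) (auto simp: pos_divide_le_eq mult.commute)
    then show ?thesis using t False by (simp add: pos_divide_le_eq mult.commute)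
  qed
  then show ?thesis
    using D0 t by (cases "D = 0") (auto simp: s_metric_def D_def[symmetric] pos_divide_le_eq)
qed

lemma le_s_metricI:
  fixes G :: "complex set"
  assumes z: "z \<in> frontier G" and xy: "x \<noteq> y"
    and bound: "t * (cmod (x - z) + cmod (z - y)) \<le> cmod (x - y)"
  shows "t \<le> s_metric G x y"
proof -
  define D where "D = Inf ((\<lambda>z. cmod (x - z) + cmod (z - y)) ` frontier G)"
  have "cmod (x - y) \<le> cmod (x - w) + cmod (w - y)" for w
    using norm_triangle_ineq[of "x - w" "w - y"] by simp
  then have "cmod (x - y) \<le> D" unfolding D_def using z by (intro cInf_greatest) auto
  moreover have "0 < cmod (x - y)" using xy by simp
  ultimately have D0: "0 < D" by linarith
  have "D \<le> cmod (x - z) + cmod (z - y)"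
    unfolding D_def using z by (intro cInf_lower bdd_belowI[of _ 0]) auto
  have "t * D \<le> cmod (x - y)"
  proof (cases "0 \<le> t")
    case True
    then show ?thesis using bound \<open>D \<le> _\<close> by (meson mult_left_mono order_trans)
  next
    case False
    then have "t * D < 0" using D0 by (simp add: mult_neg_pos)
    then show ?thesis using norm_ge_zero[of "x - y"] by linarith
  qed
  then show ?thesis using D0 by (simp add: s_metric_def D_def[symmetric] pos_le_divide_eq)
qed

lemma s_metric_le_1:
  fixes G :: "complex set"
  assumes "frontier G \<noteq> {}"
  shows "s_metric G x y \<le> 1"
proof -
  have "cmod (x - y) \<le> cmod (x - z) + cmod (z - y)" for z
    using norm_triangle_ineq[of "x - z" "z - y"] by simp
  then show ?thesis using mult_s_metric_leI[OF assms, of 1 1 x y] by simp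
qed

lemma tanh_artanh:
  fixes q :: real
  assumes "-1 < q" "q < 1"
  shows "tanh (artanh q) = q"
proof -
  have "exp (- 2 * artanh q) = exp (- ln ((1 + q) / (1 - q)))" by (simp add: artanh_def)
  also have "\<dots> = (1 - q) / (1 + q)" using assms by (simp add: exp_minus exp_ln)
  finally have e: "exp (- 2 * artanh q) = (1 - q) / (1 + q)" .
  show ?thesis unfolding tanh_real_altdef e using assms by (simp add: field_simps)
qed

lemma norm_diff_less_norm_diff_cnj:
  fixes u v :: complex
  assumes "0 < Im u" "0 < Im v"
  shows "cmod (u - v) < cmod (u - cnj v)"
proof -
  have "cmod (u - cnj v)^2 - cmod (u - v)^2 = 4 * (Im u * Im v)"
    unfolding cmod_power2 by (simp add: power2_eq_square algebra_simps)
  moreover have "0 < Im u * Im v" using assms by simp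
  ultimately have "cmod (u - v)^2 < cmod (u - cnj v)^2" by linarith
  then show ?thesis by (rule power_less_imp_less_base) simp
qed

lemma tanh_half_rho_H:
  assumes "0 < Im u" "0 < Im v"
  shows "tanh (rho_H u v / 2) = cmod (u - v) / cmod (u - cnj v)"
proof -
  have "cmod (u - v) < cmod (u - cnj v)" by (rule norm_diff_less_norm_diff_cnj[OF assms])
  then have "cmod (u - v) / cmod (u - cnj v) < 1" by (simp add: divide_less_eq)
  moreover have "0 \<le> cmod (u - v) / cmod (u - cnj v)" by simp
  ultimately have "-1 < cmod (u - v) / cmod (u - cnj v)" "cmod (u - v) / cmod (u - cnj v) < 1"
    by linarith+
  then show ?thesis by (simp add: rho_H_def tanh_artanh)
qed

lemma Im_cpow_sector_pos:
  assumes "0 < \<theta>" "x \<in> sector \<theta>"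
  shows "0 < Im (cpow x (pi/\<theta>))"
proof -
  obtain r \<alpha> where "0 < r" "0 < \<alpha>" "\<alpha> < \<theta>" "\<And>a. cpow x a = rcis (r powr a) (a * \<alpha>)"
    using sector_polar_coords[OF assms(2)] by metis
  moreover have "0 < sin (pi/\<theta> * \<alpha>)"
    using \<open>0 < \<alpha>\<close> \<open>\<alpha> < \<theta>\<close> assms(1) by (intro sin_gt_zero) (auto simp: field_simps)
  ultimately show ?thesis by simp
qed

lemma tanh_half_rho_sector:
  assumes "0 < \<theta>" "x \<in> sector \<theta>" "y \<in> sector \<theta>"
  shows "tanh (rho_sector \<theta> x y / 2)
    = cmod (cpow x (pi/\<theta>) - cpow y (pi/\<theta>)) / cmod (cpow x (pi/\<theta>) - cnj (cpow y (pi/\<theta>)))"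
  unfolding rho_sector_def using assms by (intro tanh_half_rho_H Im_cpow_sector_pos)

lemma sector_lower_estimate:
  fixes \<theta> :: real and x y z :: complex
  assumes th: "pi < \<theta>" "\<theta> < 2*pi" and x: "x \<in> sector \<theta>" and y: "y \<in> sector \<theta>"
    and z: "z \<in> frontier (sector \<theta>)"
  shows "pi/\<theta> * cmod (x - y) * cmod (cpow x (pi/\<theta>) - cnj (cpow y (pi/\<theta>)))
    \<le> (cmod (x - z) + cmod (z - y)) * cmod (cpow x (pi/\<theta>) - cpow y (pi/\<theta>))"
proof -
  define a where "a = pi/\<theta>"
  have a: "1/2 < a" "a < 1" "pi/a = \<theta>" using th by (auto simp: a_def field_simps)
  obtain r \<alpha> where r: "0 < r" and \<alpha>: "0 < \<alpha>" "\<alpha> < \<theta>" and x': "x = rcis r \<alpha>"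
    and u: "cpow x a = rcis (r powr a) (a * \<alpha>)"
    using sector_polar_coords[OF x] by metis
  obtain p \<beta> where p: "0 < p" and \<beta>: "0 < \<beta>" "\<beta> < \<theta>" and y': "y = rcis p \<beta>"
    and v: "cpow y a = rcis (p powr a) (a * \<beta>)"
    using sector_polar_coords[OF y] by metis
  define F where "F = cmod (x - z) + cmod (z - y)"
  have "cmod (x - y) \<le> F" unfolding F_def using norm_triangle_ineq[of "x - z" "z - y"] by simp
  then have "polar_dist_sq r p (\<alpha> - \<beta>) \<le> F^2"
    using x' y' by (metis norm_rcis_diff_sq norm_ge_zero power_mono)
  moreover have "polar_dist_sq r p (reflection_angle \<alpha> \<beta>) \<le> F^2
      \<or> polar_dist_sq r p (reflection_angle (\<theta> - \<alpha>) (\<theta> - \<beta>)) \<le> F^2"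
    using frontier_sector_path_ge[OF th _ _ \<alpha> \<beta> z] r p x' y' by (simp add: F_def)
  ultimately have "a^2 * (polar_dist_sq r p (\<alpha> - \<beta>) * polar_dist_sq (r powr a) (p powr a) (a*(\<alpha>+\<beta>)))
      \<le> F^2 * polar_dist_sq (r powr a) (p powr a) (a*(\<alpha>-\<beta>))"
    using lower_angle_estimate[OF a(1,2) r p] lower_angle_estimate_reflected[OF a(1,2) r p] \<alpha> \<beta> a(3)
    by auto
  then have "(a * cmod (x - y) * cmod (cpow x a - cnj (cpow y a)))^2 \<le> (F * cmod (cpow x a - cpow y a))^2"
    unfolding power_mult_distrib u v unfolding x' y' norm_rcis_diff_sq norm_rcis_diff_cnj_sq
    by (simp add: algebra_simps)
  then show ?thesis unfolding a_def F_def by (rule power2_le_imp_le) simp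
qed

lemma sector_upper_estimate:
  fixes \<theta> :: real and x y :: complex
  assumes th: "pi < \<theta>" "\<theta> < 2*pi" and x: "x \<in> sector \<theta>" and y: "y \<in> sector \<theta>"
  obtains z where "z \<in> frontier (sector \<theta>)"
    "cmod (cpow x (pi/\<theta>) - cpow y (pi/\<theta>)) * (cmod (x - z) + cmod (z - y))
      \<le> cmod (x - y) * cmod (cpow x (pi/\<theta>) - cnj (cpow y (pi/\<theta>)))"
proof -
  define a where "a = pi/\<theta>"
  obtain r \<alpha> where r: "0 < r" and \<alpha>: "0 < \<alpha>" "\<alpha> < \<theta>" and x': "x = rcis r \<alpha>"
    and u: "cpow x a = rcis (r powr a) (a * \<alpha>)"
    using sector_polar_coords[OF x] by metis
  obtain p \<beta> where p: "0 < p" and \<beta>: "0 < \<beta>" "\<beta> < \<theta>" and y': "y = rcis p \<beta>"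
    and v: "cpow y a = rcis (p powr a) (a * \<beta>)"
    using sector_polar_coords[OF y] by metis
  obtain z where z: "z \<in> frontier (sector \<theta>)" and
    "polar_dist_sq (r powr a) (p powr a) (a*(\<alpha>-\<beta>)) * (cmod (x - z) + cmod (z - y))^2
      \<le> polar_dist_sq r p (\<alpha>-\<beta>) * polar_dist_sq (r powr a) (p powr a) (a*(\<alpha>+\<beta>))"
    using frontier_sector_upper_estimate[OF th r p \<alpha> \<beta>] x' y' by (auto simp: a_def)
  then have "(cmod (cpow x a - cpow y a) * (cmod (x - z) + cmod (z - y)))^2
      \<le> (cmod (x - y) * cmod (cpow x a - cnj (cpow y a)))^2"
    unfolding power_mult_distrib u v unfolding x' y' norm_rcis_diff_sq norm_rcis_diff_cnj_sq
    by (simp add: algebra_simps)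
  then have "cmod (cpow x a - cpow y a) * (cmod (x - z) + cmod (z - y))
      \<le> cmod (x - y) * cmod (cpow x a - cnj (cpow y a))"
    by (rule power2_le_imp_le) simp
  then show ?thesis using z that unfolding a_def by blast
qed

section \<open>The comparison and its sharpness\<close>

lemma pi_div_mult_s_metric_le_tanh_rho_sector:
  assumes th: "pi < \<theta>" "\<theta> < 2*pi" and x: "x \<in> sector \<theta>" and y: "y \<in> sector \<theta>"
  shows "pi/\<theta> * s_metric (sector \<theta>) x y \<le> tanh (rho_sector \<theta> x y / 2)"
proof -
  define U V where "U = cmod (cpow x (pi/\<theta>) - cpow y (pi/\<theta>))"
    and "V = cmod (cpow x (pi/\<theta>) - cnj (cpow y (pi/\<theta>)))"
  have "U < V" unfolding U_def V_def
    using th x y by (intro norm_diff_less_norm_diff_cnj Im_cpow_sector_pos) auto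
  then have V: "0 < V" by (metis U_def norm_ge_zero le_less_trans)
  have "pi/\<theta> * s_metric (sector \<theta>) x y \<le> U / V"
  proof (rule mult_s_metric_leI[OF frontier_sector_nonempty[OF th]])
    show "0 \<le> U / V" using V by (simp add: U_def)
    fix z assume "z \<in> frontier (sector \<theta>)"
    from sector_lower_estimate[OF th x y this]
    show "pi/\<theta> * cmod (x - y) \<le> U / V * (cmod (x - z) + cmod (z - y))"
      using V by (simp add: U_def V_def field_simps)
  qed
  then show ?thesis using th x y by (simp add: tanh_half_rho_sector U_def V_def)
qed

lemma tanh_rho_sector_le_s_metric:
  assumes th: "pi < \<theta>" "\<theta> < 2*pi" and x: "x \<in> sector \<theta>" and y: "y \<in> sector \<theta>"
  shows "tanh (rho_sector \<theta> x y / 2) \<le> s_metric (sector \<theta>) x y"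
proof (cases "x = y")
  case True
  then show ?thesis using th x y by (simp add: tanh_half_rho_sector s_metric_def)
next
  case False
  define U V where "U = cmod (cpow x (pi/\<theta>) - cpow y (pi/\<theta>))"
    and "V = cmod (cpow x (pi/\<theta>) - cnj (cpow y (pi/\<theta>)))"
  have "U < V" unfolding U_def V_def
    using th x y by (intro norm_diff_less_norm_diff_cnj Im_cpow_sector_pos) auto
  then have V: "0 < V" by (metis U_def norm_ge_zero le_less_trans)
  obtain z where z: "z \<in> frontier (sector \<theta>)"
    and "U * (cmod (x - z) + cmod (z - y)) \<le> cmod (x - y) * V"
    using sector_upper_estimate[OF th x y] unfolding U_def V_def by blast
  then have "U / V * (cmod (x - z) + cmod (z - y)) \<le> cmod (x - y)"
    using V by (simp add: field_simps)
  then have "U / V \<le> s_metric (sector \<theta>) x y" by (rule le_s_metricI[OF z False])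
  then show ?thesis using th x y by (simp add: tanh_half_rho_sector U_def V_def)
qed

lemma rcis_bisector_in_sector:
  assumes "0 < \<theta>" "\<theta> < 2*pi" "0 < R"
  shows "rcis R (\<theta>/2) \<in> sector \<theta>"
  using assms arg2pi_rcis[of R "\<theta>/2"] by (auto simp: sector_def rcis_def)

lemma tanh_rho_sector_bisector:
  assumes th: "0 < \<theta>" "\<theta> < 2*pi" and R: "0 < R"
  shows "tanh (rho_sector \<theta> (rcis 1 (\<theta>/2)) (rcis R (\<theta>/2)) / 2)
    = \<bar>1 - R powr (pi/\<theta>)\<bar> / (1 + R powr (pi/\<theta>))"
proof -
  have cp: "cpow (rcis t (\<theta>/2)) (pi/\<theta>) = rcis (t powr (pi/\<theta>)) (pi/2)" if "0 < t" for t
    using that th by (simp add: cpow_rcis_arg2pi arg2pi_rcis)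
  have "cmod (rcis 1 (pi/2) - rcis S (pi/2)) = \<bar>1 - S\<bar>" for S
    unfolding norm_rcis_diff by (simp add: polar_dist_sq_0)
  moreover have "cmod (rcis 1 (pi/2) - cnj (rcis S (pi/2))) = 1 + S" if "0 \<le> S" for S
    using norm_rcis_diff_cnj_sq[of 1 "pi/2" S "pi/2"] that by (simp add: polar_dist_sq_pi)
  ultimately show ?thesis
    using th R rcis_bisector_in_sector[OF th] cp[of 1] cp[OF R] by (simp add: tanh_half_rho_sector)
qed

lemma s_metric_bisector_ge:
  assumes th: "pi < \<theta>" "\<theta> < 2*pi" and R: "0 < R" "R \<noteq> 1"
  shows "\<bar>1 - R\<bar> / (1 + R) \<le> s_metric (sector \<theta>) (rcis 1 (\<theta>/2)) (rcis R (\<theta>/2))"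
proof (rule le_s_metricI[OF ray_in_frontier_sector(1)[OF th order_refl]])
  have "cmod (rcis 1 (\<theta>/2) - rcis R (\<theta>/2)) = \<bar>1 - R\<bar>"
    unfolding norm_rcis_diff by (simp add: polar_dist_sq_0)
  then show "rcis 1 (\<theta>/2) \<noteq> rcis R (\<theta>/2)"
    and "\<bar>1 - R\<bar> / (1 + R) * (cmod (rcis 1 (\<theta>/2) - rcis 0 0) + cmod (rcis 0 0 - rcis R (\<theta>/2)))
      \<le> cmod (rcis 1 (\<theta>/2) - rcis R (\<theta>/2))"
    using R by auto
qed

lemma one_minus_powr_le:
  fixes R a :: real
  assumes "0 < R" "0 \<le> a"
  shows "1 - R powr a \<le> a * (1 - R) / R"
proof -
  have "1 - 1/R \<le> ln R" using ln_le_minus_one[of "1/R"] assms by (simp add: ln_div)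
  then have "a * (1 - 1/R) \<le> a * ln R" using assms by (intro mult_left_mono)
  moreover have "1 + a * ln R \<le> R powr a" using assms exp_ge_add_one_self[of "a * ln R"] by (simp add: powr_def)
  ultimately have "1 - R powr a \<le> - a * (1 - 1/R)" by linarith
  also have "\<dots> = a * (1 - R) / R" using assms by (simp add: field_simps)
  finally show ?thesis .
qed

lemma tanh_rho_sector_lt_mult_s_metric:
  assumes th: "pi < \<theta>" "\<theta> < 2*pi" and c: "pi/\<theta> < c"
  shows "\<exists>x\<in>sector \<theta>. \<exists>y\<in>sector \<theta>. tanh (rho_sector \<theta> x y / 2) < c * s_metric (sector \<theta>) x y"
proof -
  define a where "a = pi/\<theta>"
  have a: "0 < a" "a < 1" "a < c" using th c by (auto simp: a_def field_simps)
  define R where "R = (1 + a/c) / 2"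
  have R: "0 < R" "R < 1" "a < c * R" using a by (auto simp: R_def field_simps)
  have "R powr a < 1" using R a by (metis powr_less_mono2 powr_one_eq_one less_imp_le)
  moreover have "R \<le> R powr a" using R a powr_mono'[of a 1 R] by simp
  moreover have "1 - R powr a \<le> a * (1 - R) / R" using R a by (intro one_minus_powr_le) auto
  ultimately have "(1 - R powr a) / (1 + R powr a) \<le> (a * (1 - R) / R) / (1 + R)"
    using R a by (intro frac_le) auto
  moreover have "tanh (rho_sector \<theta> (rcis 1 (\<theta>/2)) (rcis R (\<theta>/2)) / 2)
      = (1 - R powr a) / (1 + R powr a)"
    using tanh_rho_sector_bisector[of \<theta> R] th R \<open>R powr a < 1\<close> by (simp add: a_def)
  ultimately have "tanh (rho_sector \<theta> (rcis 1 (\<theta>/2)) (rcis R (\<theta>/2)) / 2) \<le> (a * (1 - R) / R) / (1 + R)"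
    by simp
  also have "\<dots> < c * ((1 - R) / (1 + R))"
  proof -
    have "a * (1 - R) < c * R * (1 - R)" using R by (intro mult_strict_right_mono) auto
    then have "a * (1 - R) / R < c * (1 - R)" using R by (simp add: pos_divide_less_eq mult_ac)
    then have "a * (1 - R) / R / (1 + R) < c * (1 - R) / (1 + R)"
      using R by (intro divide_strict_right_mono) auto
    then show ?thesis by simp
  qed
  also have "\<dots> \<le> c * s_metric (sector \<theta>) (rcis 1 (\<theta>/2)) (rcis R (\<theta>/2))"
    using s_metric_bisector_ge[OF th R(1)] R a by (intro mult_left_mono) auto
  finally show ?thesis using th R rcis_bisector_in_sector[of \<theta>] by fastforce
qed

lemma mult_s_metric_lt_tanh_rho_sector:
  assumes th: "pi < \<theta>" "\<theta> < 2*pi" and c: "c < 1"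
  shows "\<exists>x\<in>sector \<theta>. \<exists>y\<in>sector \<theta>. c * s_metric (sector \<theta>) x y < tanh (rho_sector \<theta> x y / 2)"
proof -
  define M where "M = 1 + 2 / (1 - c)"
  have "1 < M" "M * (1 - c) = 3 - c" using c by (simp_all add: M_def field_simps)
  then have "c * (1 + M) < M - 1" using c by (simp add: algebra_simps)
  then have M: "1 < M" "c < (M - 1) / (1 + M)" using \<open>1 < M\<close> by (simp_all add: pos_less_divide_eq)
  define R where "R = M powr (\<theta>/pi)"
  have "0 < R" using M by (simp add: R_def)
  have "R powr (pi/\<theta>) = M" using M th by (simp add: R_def powr_powr)
  define x y where "x = rcis 1 (\<theta>/2)" and "y = rcis R (\<theta>/2)"
  have xy: "x \<in> sector \<theta>" "y \<in> sector \<theta>"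
    using th \<open>0 < R\<close> by (simp_all add: x_def y_def rcis_bisector_in_sector)
  have T: "tanh (rho_sector \<theta> x y / 2) = (M - 1) / (1 + M)"
    using th \<open>0 < R\<close> \<open>R powr (pi/\<theta>) = M\<close> M by (simp add: x_def y_def tanh_rho_sector_bisector)
  have "c * s_metric (sector \<theta>) x y < tanh (rho_sector \<theta> x y / 2)"
  proof (cases "c \<le> 0")
    case True
    have "0 < tanh (rho_sector \<theta> x y / 2)" using T M by simp
    moreover from this have "0 \<le> s_metric (sector \<theta>) x y"
      using tanh_rho_sector_le_s_metric[OF th xy] by linarith
    ultimately show ?thesis using True by (smt (verit) mult_nonpos_nonneg)
  next
    case False
    then have "c * s_metric (sector \<theta>) x y \<le> c"
      using s_metric_le_1[OF frontier_sector_nonempty[OF th]] by (simp add: mult_left_le)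
    then show ?thesis using T M by linarith
  qed
  then show ?thesis using xy by blast
qed

theorem theorem4p6:
  fixes \<theta> :: real
  assumes "pi < \<theta>" and "\<theta> < 2 * pi"
  shows "(\<forall>x\<in>sector \<theta>. \<forall>y\<in>sector \<theta>.
            (pi / \<theta>) * s_metric (sector \<theta>) x y \<le> tanh (rho_sector \<theta> x y / 2) \<and>
            tanh (rho_sector \<theta> x y / 2) \<le> s_metric (sector \<theta>) x y)
       \<and> (\<forall>c > pi / \<theta>. \<exists>x\<in>sector \<theta>. \<exists>y\<in>sector \<theta>.
            tanh (rho_sector \<theta> x y / 2) < c * s_metric (sector \<theta>) x y)
       \<and> (\<forall>c < 1. \<exists>x\<in>sector \<theta>. \<exists>y\<in>sector \<theta>.
            c * s_metric (sector \<theta>) x y < tanh (rho_sector \<theta> x y / 2))"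
  using pi_div_mult_s_metric_le_tanh_rho_sector[OF assms] tanh_rho_sector_le_s_metric[OF assms]
    tanh_rho_sector_lt_mult_s_metric[OF assms] mult_s_metric_lt_tanh_rho_sector[OF assms]
  by blast

end
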